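(* Let $\Sigma$ be a finite ranked set, $X$ a ranked set and $G\in\mathsf{H}X$. Then there is an operation $f$, taking an arity-respecting $X$-indexed family of models (one model $\mathcal{A}_x$ in the image of $\lceil\cdot\rceil$ on $\mathsf{H}\Sigma$ of arity equal to that of $x$ for each $x\in X$) to a model, which is compatible with counting MSO and satisfies $f\big((\lceil\eta(x)\rceil)_{x\in X}\big)=\lceil [\![G]\!](\eta)\rceil$ (up to isomorphism) for every arity-preserving valuation $\eta:X\to\mathsf{H}\Sigma$.
   Context: A ranked set is a set in which each element has an arity in $\{0,1,2,\dots\}$. A sourced hypergraph of arity $n$ over $\Sigma$: finite vertex set, finite ranked set of hyperedges labelled arity-preservingly by $\Sigma$, incidence mapping each $m$-ary hyperedge $e$ to a non-repeating list $e[1],\dots,e[m]$ of vertices, injective sources $\{1,\dots,n\}\to$ vertices; $\mathsf{H}\Sigma$ denotes these up to isomorphism. Flattening of $K\in\mathsf{H}\mathsf{H}\Sigma$: hyperedges $(e,f)$, $e$ a hyperedge of $K$, $f$ a hyperedge of the label of $e$ (label from $f$); vertices: vertices of $K$ and pairs $(e,v)$ with $v$ a non-source vertex of the label of $e$; sources from $K$; incidence of $(e,f)$ is that of $f$ with $v\mapsto(e,v)$ for non-sources and $v\mapsto e[i]$ if $v$ is the $i$-th source of the label of $e$. $[\![G]\!](\eta)$ is the flattening of the element of $\mathsf{H}\mathsf{H}\Sigma$ obtained from $G$ by replacing each label $x$ by $\eta(x)$. For $K\in\mathsf{H}\Sigma$, the model $\lceil K\rceil$ has universe the disjoint union of vertices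 and hyperedges, for each $a\in\Sigma$ a unary relation of hyperedges labelled $a$, for each $i$ up to the maximal arity in $\Sigma$ a binary relation $\{(e,v):e[i]=v\}$, and for each $i$ up to the arity of $K$ a constant for the $i$-th source. Counting MSO (in extended syntax) is MSO extended with predicates $|Y|\equiv k\bmod m$ (true iff $Y$ finite of size $\equiv k$ mod $m$), a binary set-inclusion predicate, a unary "is a singleton" predicate, and for every quantifier-free first-order formula $\psi(x)$ with one free variable a set constant $[\psi]$ denoting the set of elements satisfying $\psi$; quantifier rank counts first- and second-order quantifiers alike. For $r\in\mathbb{N}$ and $M\subseteq\mathbb{N}$, two models over the same vocabulary are $(r,M)$-equivalent if they satisfy the same counting MSO sentences of quantifier rank at most $r$ using only moduli from $M$. An operation on families of models is compatible with counting MSO if for all $r$ and $M$, componentwise $(r,M)$-equivalent input families yield $(r,M)$-equivalent outputs. *)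

theory Defs
  imports Main
begin

text \<open>A (concrete) sourced hypergraph: vertices, hyperedges, labelling, incidence lists
  (0-based lists; the paper's e[i] is inc e ! (i-1)) and a list of sources.\<close>

record ('v, 'e, 'a) hg =
  verts :: "'v set"
  edges :: "'e set"
  lab   :: "'e \<Rightarrow> 'a"
  inc   :: "'e \<Rightarrow> 'v list"
  srcs  :: "'v list"

definition is_hg :: "'a set \<Rightarrow> ('a \<Rightarrow> nat) \<Rightarrow> ('v, 'e, 'a, 'z) hg_scheme \<Rightarrow> bool" where
  "is_hg S ar H \<longleftrightarrow>
     finite (verts H) \<and> finite (edges H) \<and>
     (\<forall>e\<in>edges H. lab H e \<in> S \<and> length (inc H e) = ar (lab H e) \<and>
                  distinct (inc H e) \<and> set (inc H e) \<subseteq> verts H) \<and>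
     distinct (srcs H) \<and> set (srcs H) \<subseteq> verts H"

definition arity :: "('v, 'e, 'a, 'z) hg_scheme \<Rightarrow> nat" where
  "arity H = length (srcs H)"

definition valuation :: "'a set \<Rightarrow> ('a \<Rightarrow> nat) \<Rightarrow> 'x set \<Rightarrow> ('x \<Rightarrow> nat)
    \<Rightarrow> ('x \<Rightarrow> ('v, 'e, 'a) hg) \<Rightarrow> bool" where
  "valuation S arS X arX \<eta> \<longleftrightarrow> (\<forall>x\<in>X. is_hg S arS (\<eta> x) \<and> arity (\<eta> x) = arX x)"

definition src_pos :: "'v list \<Rightarrow> 'v \<Rightarrow> nat" where
  "src_pos s v = (LEAST i. i < length s \<and> s ! i = v)"

text \<open>[[G]](\<eta>): the flattening of G with each label x replaced by \<eta> x.
  Vertices of K become Inl v, inner (non-source) vertices Inr (e, v).\<close>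
definition flatten :: "('vg, 'eg, 'x) hg \<Rightarrow> ('x \<Rightarrow> ('v, 'e, 'a) hg)
     \<Rightarrow> ('vg + 'eg \<times> 'v, 'eg \<times> 'e, 'a) hg" where
  "flatten G \<eta> =
    \<lparr> verts = Inl ` verts G \<union>
              {Inr (e, v) | e v. e \<in> edges G \<and> v \<in> verts (\<eta> (lab G e))
                                 \<and> v \<notin> set (srcs (\<eta> (lab G e)))},
      edges = {(e, f) | e f. e \<in> edges G \<and> f \<in> edges (\<eta> (lab G e))},
      lab = (\<lambda>(e, f). lab (\<eta> (lab G e)) f),
      inc = (\<lambda>(e, f). map (\<lambda>v. if v \<in> set (srcs (\<eta> (lab G e)))
                               then Inl (inc G e ! src_pos (srcs (\<eta> (lab G e))) v)
                               else Inr (e, v))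
                          (inc (\<eta> (lab G e)) f)),
      srcs = map Inl (srcs G) \<rparr>"

text \<open>Relational structures over the vocabulary of hypergraph models: unary relations
  indexed by labels, binary incidence relations indexed by positions i (1-based),
  constants indexed by 1-based source numbers.\<close>

record ('u, 'a) model =
  univ   :: "'u set"
  labrel :: "'a \<Rightarrow> 'u set"
  increl :: "nat \<Rightarrow> ('u \<times> 'u) set"
  cnst   :: "nat \<Rightarrow> 'u"

text \<open>A vocabulary (S, m, n): unary symbols S, binary symbols 1..m, constants 1..n.\<close>
type_synonym 'a voc = "'a set \<times> nat \<times> nat"

definition maxar :: "'a set \<Rightarrow> ('a \<Rightarrow> nat) \<Rightarrow> nat" where
  "maxar S ar = Max (insert 0 (ar ` S))"

definition voc :: "'a set \<Rightarrow> ('a \<Rightarrow> nat) \<Rightarrow> nat \<Rightarrow> 'a voc" where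
  "voc S ar n = (S, maxar S ar, n)"

definition model_of :: "('v, 'e, 'a) hg \<Rightarrow> ('v + 'e, 'a) model" where
  "model_of K =
    \<lparr> univ = Inl ` verts K \<union> Inr ` edges K,
      labrel = (\<lambda>a. {Inr e | e. e \<in> edges K \<and> lab K e = a}),
      increl = (\<lambda>i. {(Inr e, Inl v) | e v. e \<in> edges K \<and> 1 \<le> i \<and> i \<le> length (inc K e)
                                       \<and> inc K e ! (i - 1) = v}),
      cnst = (\<lambda>j. Inl (srcs K ! (j - 1))) \<rparr>"

definition iso_model :: "'a voc \<Rightarrow> ('u, 'a) model \<Rightarrow> ('w, 'a) model \<Rightarrow> bool" where
  "iso_model Vc A B \<longleftrightarrow> (case Vc of (S, m, n) \<Rightarrow>
     (\<exists>h. bij_betw h (univ A) (univ B) \<and>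
        (\<forall>a\<in>S. \<forall>u\<in>univ A. u \<in> labrel A a \<longleftrightarrow> h u \<in> labrel B a) \<and>
        (\<forall>i\<in>{1..m}. \<forall>u\<in>univ A. \<forall>w\<in>univ A. (u, w) \<in> increl A i \<longleftrightarrow> (h u, h w) \<in> increl B i) \<and>
        (\<forall>j\<in>{1..n}. cnst A j \<in> univ A \<and> h (cnst A j) = cnst B j)))"

datatype trm = V nat | C nat

datatype 'a fm =
    Eq trm trm
  | LabA 'a trm
  | IncA nat trm trm
  | Mem trm "'a st"
  | Cnt "'a st" nat nat    \<comment> \<open>Cnt Y k m : |Y| = k mod m\<close>
  | Sub "'a st" "'a st"
  | Sng "'a st"
  | Neg "'a fm"
  | Conj "'a fm" "'a fm"
  | Ex1 nat "'a fm"
  | Ex2 nat "'a fm"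
and 'a st =
    SV nat
  | SC "'a fm"   \<comment> \<open>set constant [\<psi>], \<psi> with free first-order variable V 0\<close>

fun tm :: "('u, 'a) model \<Rightarrow> (nat \<Rightarrow> 'u) \<Rightarrow> trm \<Rightarrow> 'u" where
  "tm A \<rho> (V i) = \<rho> i"
| "tm A \<rho> (C j) = cnst A j"

fun sat :: "('u, 'a) model \<Rightarrow> (nat \<Rightarrow> 'u) \<Rightarrow> (nat \<Rightarrow> 'u set) \<Rightarrow> 'a fm \<Rightarrow> bool"
and sset :: "('u, 'a) model \<Rightarrow> (nat \<Rightarrow> 'u) \<Rightarrow> (nat \<Rightarrow> 'u set) \<Rightarrow> 'a st \<Rightarrow> 'u set" where
  "sat A \<rho> \<sigma> (Eq s t) = (tm A \<rho> s = tm A \<rho> t)"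
| "sat A \<rho> \<sigma> (LabA a t) = (tm A \<rho> t \<in> labrel A a)"
| "sat A \<rho> \<sigma> (IncA i s t) = ((tm A \<rho> s, tm A \<rho> t) \<in> increl A i)"
| "sat A \<rho> \<sigma> (Mem t Y) = (tm A \<rho> t \<in> sset A \<rho> \<sigma> Y)"
| "sat A \<rho> \<sigma> (Cnt Y k m) = (finite (sset A \<rho> \<sigma> Y) \<and> card (sset A \<rho> \<sigma> Y) mod m = k mod m)"
| "sat A \<rho> \<sigma> (Sub Y Z) = (sset A \<rho> \<sigma> Y \<subseteq> sset A \<rho> \<sigma> Z)"
| "sat A \<rho> \<sigma> (Sng Y) = (\<exists>u. sset A \<rho> \<sigma> Y = {u})"
| "sat A \<rho> \<sigma> (Neg \<phi>) = (\<not> sat A \<rho> \<sigma> \<phi>)"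
| "sat A \<rho> \<sigma> (Conj \<phi> \<psi>) = (sat A \<rho> \<sigma> \<phi> \<and> sat A \<rho> \<sigma> \<psi>)"
| "sat A \<rho> \<sigma> (Ex1 i \<phi>) = (\<exists>u\<in>univ A. sat A (\<rho>(i := u)) \<sigma> \<phi>)"
| "sat A \<rho> \<sigma> (Ex2 i \<phi>) = (\<exists>U. U \<subseteq> univ A \<and> sat A \<rho> (\<sigma>(i := U)) \<phi>)"
| "sset A \<rho> \<sigma> (SV i) = \<sigma> i"
| "sset A \<rho> \<sigma> (SC \<psi>) = {u \<in> univ A. sat A (\<rho>(0 := u)) \<sigma> \<psi>}"

fun tvars :: "trm \<Rightarrow> nat set" where
  "tvars (V i) = {i}"
| "tvars (C j) = {}"

fun tconsts :: "trm \<Rightarrow> nat set" where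
  "tconsts (V i) = {}"
| "tconsts (C j) = {j}"

fun fv1 :: "'a fm \<Rightarrow> nat set" and fv1s :: "'a st \<Rightarrow> nat set" where
  "fv1 (Eq s t) = tvars s \<union> tvars t"
| "fv1 (LabA a t) = tvars t"
| "fv1 (IncA i s t) = tvars s \<union> tvars t"
| "fv1 (Mem t Y) = tvars t \<union> fv1s Y"
| "fv1 (Cnt Y k m) = fv1s Y"
| "fv1 (Sub Y Z) = fv1s Y \<union> fv1s Z"
| "fv1 (Sng Y) = fv1s Y"
| "fv1 (Neg \<phi>) = fv1 \<phi>"
| "fv1 (Conj \<phi> \<psi>) = fv1 \<phi> \<union> fv1 \<psi>"
| "fv1 (Ex1 i \<phi>) = fv1 \<phi> - {i}"
| "fv1 (Ex2 i \<phi>) = fv1 \<phi>"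
| "fv1s (SV i) = {}"
| "fv1s (SC \<psi>) = {}"

fun fv2 :: "'a fm \<Rightarrow> nat set" and fv2s :: "'a st \<Rightarrow> nat set" where
  "fv2 (Eq s t) = {}"
| "fv2 (LabA a t) = {}"
| "fv2 (IncA i s t) = {}"
| "fv2 (Mem t Y) = fv2s Y"
| "fv2 (Cnt Y k m) = fv2s Y"
| "fv2 (Sub Y Z) = fv2s Y \<union> fv2s Z"
| "fv2 (Sng Y) = fv2s Y"
| "fv2 (Neg \<phi>) = fv2 \<phi>"
| "fv2 (Conj \<phi> \<psi>) = fv2 \<phi> \<union> fv2 \<psi>"
| "fv2 (Ex1 i \<phi>) = fv2 \<phi>"
| "fv2 (Ex2 i \<phi>) = fv2 \<phi> - {i}"
| "fv2s (SV i) = {i}"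
| "fv2s (SC \<psi>) = {}"

text \<open>Quantifier-free first-order formulas (allowed inside set constants).\<close>
fun qf_fo :: "'a fm \<Rightarrow> bool" where
  "qf_fo (Eq s t) = True"
| "qf_fo (LabA a t) = True"
| "qf_fo (IncA i s t) = True"
| "qf_fo (Neg \<phi>) = qf_fo \<phi>"
| "qf_fo (Conj \<phi> \<psi>) = (qf_fo \<phi> \<and> qf_fo \<psi>)"
| "qf_fo _ = False"

fun wf :: "'a voc \<Rightarrow> 'a fm \<Rightarrow> bool" and wfs :: "'a voc \<Rightarrow> 'a st \<Rightarrow> bool" where
  "wf Vc (Eq s t) = (tconsts s \<union> tconsts t \<subseteq> {1..snd (snd Vc)})"
| "wf Vc (LabA a t) = (a \<in> fst Vc \<and> tconsts t \<subseteq> {1..snd (snd Vc)})"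
| "wf Vc (IncA i s t) = (i \<in> {1..fst (snd Vc)} \<and> tconsts s \<union> tconsts t \<subseteq> {1..snd (snd Vc)})"
| "wf Vc (Mem t Y) = (tconsts t \<subseteq> {1..snd (snd Vc)} \<and> wfs Vc Y)"
| "wf Vc (Cnt Y k m) = (0 < m \<and> wfs Vc Y)"
| "wf Vc (Sub Y Z) = (wfs Vc Y \<and> wfs Vc Z)"
| "wf Vc (Sng Y) = wfs Vc Y"
| "wf Vc (Neg \<phi>) = wf Vc \<phi>"
| "wf Vc (Conj \<phi> \<psi>) = (wf Vc \<phi> \<and> wf Vc \<psi>)"
| "wf Vc (Ex1 i \<phi>) = wf Vc \<phi>"
| "wf Vc (Ex2 i \<phi>) = wf Vc \<phi>"
| "wfs Vc (SV i) = True"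
| "wfs Vc (SC \<psi>) = (qf_fo \<psi> \<and> fv1 \<psi> \<subseteq> {0} \<and> wf Vc \<psi>)"

fun qr :: "'a fm \<Rightarrow> nat" where
  "qr (Neg \<phi>) = qr \<phi>"
| "qr (Conj \<phi> \<psi>) = max (qr \<phi>) (qr \<psi>)"
| "qr (Ex1 i \<phi>) = Suc (qr \<phi>)"
| "qr (Ex2 i \<phi>) = Suc (qr \<phi>)"
| "qr _ = 0"

text \<open>Moduli used (set constants are quantifier-free first-order, so contain none).\<close>
fun mods :: "'a fm \<Rightarrow> nat set" where
  "mods (Cnt Y k m) = {m}"
| "mods (Neg \<phi>) = mods \<phi>"
| "mods (Conj \<phi> \<psi>) = mods \<phi> \<union> mods \<psi>"
| "mods (Ex1 i \<phi>) = mods \<phi>"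
| "mods (Ex2 i \<phi>) = mods \<phi>"
| "mods _ = {}"

definition sentence :: "'a voc \<Rightarrow> 'a fm \<Rightarrow> bool" where
  "sentence Vc \<phi> \<longleftrightarrow> wf Vc \<phi> \<and> fv1 \<phi> = {} \<and> fv2 \<phi> = {}"

definition models :: "('u, 'a) model \<Rightarrow> 'a fm \<Rightarrow> bool" where
  "models A \<phi> \<longleftrightarrow> sat A (\<lambda>_. undefined) (\<lambda>_. {}) \<phi>"

definition rM_equiv :: "'a voc \<Rightarrow> nat \<Rightarrow> nat set \<Rightarrow> ('u, 'a) model \<Rightarrow> ('w, 'a) model \<Rightarrow> bool" where
  "rM_equiv Vc r M A B \<longleftrightarrow>
     (\<forall>\<phi>. sentence Vc \<phi> \<and> qr \<phi> \<le> r \<and> mods \<phi> \<subseteq> M \<longrightarrow> (models A \<phi> \<longleftrightarrow> models B \<phi>))"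

definition in_domain :: "'a set \<Rightarrow> ('a \<Rightarrow> nat) \<Rightarrow> 'x set \<Rightarrow> ('x \<Rightarrow> nat)
    \<Rightarrow> ('x \<Rightarrow> ('v + 'e, 'a) model) \<Rightarrow> bool" where
  "in_domain S arS X arX A \<longleftrightarrow>
     (\<forall>x\<in>X. \<exists>K :: ('v, 'e, 'a) hg. is_hg S arS K \<and> arity K = arX x \<and> A x = model_of K)"

definition compatible :: "'a set \<Rightarrow> ('a \<Rightarrow> nat) \<Rightarrow> 'x set \<Rightarrow> ('x \<Rightarrow> nat) \<Rightarrow> nat
    \<Rightarrow> (('x \<Rightarrow> ('v + 'e, 'a) model) \<Rightarrow> ('w, 'a) model) \<Rightarrow> bool" where
  "compatible S arS X arX n f \<longleftrightarrow>
     (\<forall>r M A B. in_domain S arS X arX A \<and> in_domain S arS X arX B \<and>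
        (\<forall>x\<in>X. rM_equiv (voc S arS (arX x)) r M (A x) (B x))
        \<longrightarrow> rM_equiv (voc S arS n) r M (f A) (f B))"

end

theory Submission
  imports Defs
begin

text \<open>
  The operation glues the component models along \<open>G\<close>: its universe consists of the vertices
  of \<open>G\<close> and, for every hyperedge \<open>e\<close> of \<open>G\<close>, a copy of the model assigned to the label of \<open>e\<close>
  in which the \<open>k\<close>-th constant is identified with the \<open>k\<close>-th vertex incident to \<open>e\<close>. On models of
  hypergraphs this is literally the model of the flattening.

  Compatibility is an Ehrenfeucht-Fraisse argument by induction on formulas. Two assignments into
  glued models correspond if they agree on the vertices of \<open>G\<close>, send every variable into the same
  component on both sides, and are \<open>(r, M)\<close>-equivalent inside every component. Atomic formulas are
  then decided componentwise: a set splits into its part on \<open>G\<close> and its traces on the components,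
  so sizes modulo \<open>m\<close> add up, and singletons are recognised from the sizes truncated at 2.
  A quantifier is answered in the component of the witness (for a set: in all components at once)
  by the forth property of \<open>(r, M)\<close>-equivalence, which holds for finite models.
\<close>

section \<open>Counting MSO with assignments\<close>

lemma sat_sset_fv_cong:
  shows "wf Vc \<phi> \<Longrightarrow> (\<forall>a\<in>fv1 \<phi>. \<rho> a = \<rho>' a) \<Longrightarrow> sat A \<rho> \<sigma> \<phi> = sat A \<rho>' \<sigma> \<phi>"
    and "wfs Vc Y \<Longrightarrow> (\<forall>a\<in>fv1s Y. \<rho> a = \<rho>' a) \<Longrightarrow> sset A \<rho> \<sigma> Y = sset A \<rho>' \<sigma> Y"
proof (induction \<phi> and Y arbitrary: \<rho> \<rho>' \<sigma> and \<rho> \<rho>' \<sigma>)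
  case (Eq s t) then show ?case by (cases s; cases t; auto)
next
  case (LabA a t) then show ?case by (cases t; auto)
next
  case (IncA i s t) then show ?case by (cases s; cases t; auto)
next
  case (Mem t Y) then show ?case by (cases t; auto)
next
  case (Ex1 i \<phi>)
  have "\<And>u. sat A (\<rho>(i:=u)) \<sigma> \<phi> = sat A (\<rho>'(i:=u)) \<sigma> \<phi>"
    using Ex1 by (intro Ex1.IH) auto
  then show ?case by simp
next
  case (SC \<psi>)
  have "\<And>u. sat A (\<rho>(0:=u)) \<sigma> \<psi> = sat A (\<rho>'(0:=u)) \<sigma> \<psi>"
    using SC by (intro SC.IH) auto
  then show ?case by simp
qed (simp_all, (metis UnCI)+)

definition rM_equiv_on :: "'a voc \<Rightarrow> nat \<Rightarrow> nat set \<Rightarrow> nat set \<Rightarrow> nat set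
    \<Rightarrow> ('u, 'a) model \<Rightarrow> (nat \<Rightarrow> 'u) \<Rightarrow> (nat \<Rightarrow> 'u set)
    \<Rightarrow> ('w, 'a) model \<Rightarrow> (nat \<Rightarrow> 'w) \<Rightarrow> (nat \<Rightarrow> 'w set) \<Rightarrow> bool" where
  "rM_equiv_on Vc r M D D2 A \<rho> \<sigma> B \<rho>' \<sigma>' \<longleftrightarrow>
     (\<forall>\<phi>. wf Vc \<phi> \<and> qr \<phi> \<le> r \<and> mods \<phi> \<subseteq> M \<and> fv1 \<phi> \<subseteq> D \<and> fv2 \<phi> \<subseteq> D2
        \<longrightarrow> (sat A \<rho> \<sigma> \<phi> \<longleftrightarrow> sat B \<rho>' \<sigma>' \<phi>))"

lemma rM_equiv_onD:
  "rM_equiv_on Vc r M D D2 A \<rho> \<sigma> B \<rho>' \<sigma>' \<Longrightarrow> wf Vc \<phi> \<Longrightarrow> qr \<phi> \<le> r \<Longrightarrow> mods \<phi> \<subseteq> M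
    \<Longrightarrow> fv1 \<phi> \<subseteq> D \<Longrightarrow> fv2 \<phi> \<subseteq> D2 \<Longrightarrow> sat A \<rho> \<sigma> \<phi> \<longleftrightarrow> sat B \<rho>' \<sigma>' \<phi>"
  unfolding rM_equiv_on_def by blast

lemma rM_equiv_on_sym:
  "rM_equiv_on Vc r M D D2 A \<rho> \<sigma> B \<rho>' \<sigma>' \<Longrightarrow> rM_equiv_on Vc r M D D2 B \<rho>' \<sigma>' A \<rho> \<sigma>"
  unfolding rM_equiv_on_def by blast

lemma rM_equiv_on_mono:
  assumes "rM_equiv_on Vc r M D D2 A \<rho> \<sigma> B \<rho>' \<sigma>'" "r0 \<le> r" "D0 \<subseteq> D"
    and "\<forall>a\<in>D0. \<rho>0 a = \<rho> a" "\<forall>a\<in>D0. \<rho>0' a = \<rho>' a"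
  shows "rM_equiv_on Vc r0 M D0 D2 A \<rho>0 \<sigma> B \<rho>0' \<sigma>'"
  unfolding rM_equiv_on_def
proof (intro allI impI)
  fix \<phi> assume \<phi>: "wf Vc \<phi> \<and> qr \<phi> \<le> r0 \<and> mods \<phi> \<subseteq> M \<and> fv1 \<phi> \<subseteq> D0 \<and> fv2 \<phi> \<subseteq> D2"
  have "sat A \<rho>0 \<sigma> \<phi> = sat A \<rho> \<sigma> \<phi>" "sat B \<rho>0' \<sigma>' \<phi> = sat B \<rho>' \<sigma>' \<phi>"
    using \<phi> assms(4,5) by (auto intro!: sat_sset_fv_cong(1))
  moreover have "sat A \<rho> \<sigma> \<phi> = sat B \<rho>' \<sigma>' \<phi>"
    using \<phi> assms(1-3) unfolding rM_equiv_on_def by auto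
  ultimately show "sat A \<rho>0 \<sigma> \<phi> = sat B \<rho>0' \<sigma>' \<phi>" by simp
qed

lemma rM_equiv_on_empty_iff:
  "rM_equiv_on Vc r M {} {} A \<rho> (\<lambda>_. {}) B \<rho>' (\<lambda>_. {}) \<longleftrightarrow> rM_equiv Vc r M A B"
proof -
  have "sat A \<rho> (\<lambda>_. {}) \<phi> = models A \<phi>" "sat B \<rho>' (\<lambda>_. {}) \<phi> = models B \<phi>"
    if "wf Vc \<phi>" "fv1 \<phi> = {}" for \<phi>
    using that unfolding models_def by (auto intro!: sat_sset_fv_cong(1))
  then show ?thesis
    unfolding rM_equiv_on_def rM_equiv_def sentence_def by auto
qed

text \<open>Closed and constant-free, hence admissible in every vocabulary and under every variable bound.\<close>

definition fm_true :: "'a fm" where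
  "fm_true = Neg (Sng (SC (Neg (Eq (V 0) (V 0)))))"

lemma fm_true_simps [simp]:
  "sat A \<rho> \<sigma> fm_true" "wf Vc fm_true" "qr fm_true = 0" "mods fm_true = {}"
  "fv1 fm_true = {}" "fv2 fm_true = {}"
  by (auto simp: fm_true_def)

definition qf_true :: "'a fm" where
  "qf_true = Eq (V 0) (V 0)"

definition qf_false :: "'a fm" where
  "qf_false = Neg qf_true"

lemma qf_true_false_simps [simp]:
  "sat A \<rho> \<sigma> qf_true" "wf Vc qf_true" "qr qf_true = 0" "mods qf_true = {}"
  "fv1 qf_true = {0}" "fv2 qf_true = {}" "qf_fo qf_true"
  "\<not> sat A \<rho> \<sigma> qf_false" "wf Vc qf_false" "qr qf_false = 0" "mods qf_false = {}"
  "fv1 qf_false = {0}" "fv2 qf_false = {}" "qf_fo qf_false"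
  by (auto simp: qf_true_def qf_false_def)

lemma foldr_Conj_simps:
  "sat A \<rho> \<sigma> (foldr Conj \<phi>s \<psi>) \<longleftrightarrow> sat A \<rho> \<sigma> \<psi> \<and> (\<forall>\<phi>\<in>set \<phi>s. sat A \<rho> \<sigma> \<phi>)"
  "wf Vc (foldr Conj \<phi>s \<psi>) \<longleftrightarrow> wf Vc \<psi> \<and> (\<forall>\<phi>\<in>set \<phi>s. wf Vc \<phi>)"
  "qf_fo (foldr Conj \<phi>s \<psi>) \<longleftrightarrow> qf_fo \<psi> \<and> (\<forall>\<phi>\<in>set \<phi>s. qf_fo \<phi>)"
  "qr (foldr Conj \<phi>s \<psi>) \<le> r \<longleftrightarrow> qr \<psi> \<le> r \<and> (\<forall>\<phi>\<in>set \<phi>s. qr \<phi> \<le> r)"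
  "mods (foldr Conj \<phi>s \<psi>) = mods \<psi> \<union> (\<Union>\<phi>\<in>set \<phi>s. mods \<phi>)"
  "fv1 (foldr Conj \<phi>s \<psi>) = fv1 \<psi> \<union> (\<Union>\<phi>\<in>set \<phi>s. fv1 \<phi>)"
  "fv2 (foldr Conj \<phi>s \<psi>) = fv2 \<psi> \<union> (\<Union>\<phi>\<in>set \<phi>s. fv2 \<phi>)"
  by (induction \<phi>s) auto

definition Disj :: "'a fm \<Rightarrow> 'a fm \<Rightarrow> 'a fm" where
  "Disj \<phi> \<psi> = Neg (Conj (Neg \<phi>) (Neg \<psi>))"

lemma foldr_Disj_simps:
  "sat A \<rho> \<sigma> (foldr Disj \<phi>s \<psi>) \<longleftrightarrow> sat A \<rho> \<sigma> \<psi> \<or> (\<exists>\<phi>\<in>set \<phi>s. sat A \<rho> \<sigma> \<phi>)"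
  "wf Vc (foldr Disj \<phi>s \<psi>) \<longleftrightarrow> wf Vc \<psi> \<and> (\<forall>\<phi>\<in>set \<phi>s. wf Vc \<phi>)"
  "qf_fo (foldr Disj \<phi>s \<psi>) \<longleftrightarrow> qf_fo \<psi> \<and> (\<forall>\<phi>\<in>set \<phi>s. qf_fo \<phi>)"
  "qr (foldr Disj \<phi>s \<psi>) \<le> r \<longleftrightarrow> qr \<psi> \<le> r \<and> (\<forall>\<phi>\<in>set \<phi>s. qr \<phi> \<le> r)"
  "mods (foldr Disj \<phi>s \<psi>) = mods \<psi> \<union> (\<Union>\<phi>\<in>set \<phi>s. mods \<phi>)"
  "fv1 (foldr Disj \<phi>s \<psi>) = fv1 \<psi> \<union> (\<Union>\<phi>\<in>set \<phi>s. fv1 \<phi>)"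
  "fv2 (foldr Disj \<phi>s \<psi>) = fv2 \<psi> \<union> (\<Union>\<phi>\<in>set \<phi>s. fv2 \<phi>)"
  by (induction \<phi>s) (auto simp: Disj_def)

lemma rM_equiv_on_finite_separation:
  assumes "finite W" and "\<forall>w\<in>W. \<not> rM_equiv_on Vc r M D D2 A \<rho> \<sigma> B (\<rho>' w) (\<sigma>' w)"
  shows "\<exists>\<Phi>. wf Vc \<Phi> \<and> qr \<Phi> \<le> r \<and> mods \<Phi> \<subseteq> M \<and> fv1 \<Phi> \<subseteq> D \<and> fv2 \<Phi> \<subseteq> D2 \<and>
    sat A \<rho> \<sigma> \<Phi> \<and> (\<forall>w\<in>W. \<not> sat B (\<rho>' w) (\<sigma>' w) \<Phi>)"
proof -
  have "\<forall>w\<in>W. \<exists>\<phi>. wf Vc \<phi> \<and> qr \<phi> \<le> r \<and> mods \<phi> \<subseteq> M \<and> fv1 \<phi> \<subseteq> D \<and> fv2 \<phi> \<subseteq> D2 \<and>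
      sat A \<rho> \<sigma> \<phi> \<and> \<not> sat B (\<rho>' w) (\<sigma>' w) \<phi>"
  proof
    fix w assume "w \<in> W"
    then obtain \<phi> where \<phi>: "wf Vc \<phi> \<and> qr \<phi> \<le> r \<and> mods \<phi> \<subseteq> M \<and> fv1 \<phi> \<subseteq> D \<and> fv2 \<phi> \<subseteq> D2"
      "sat A \<rho> \<sigma> \<phi> \<noteq> sat B (\<rho>' w) (\<sigma>' w) \<phi>"
      using assms(2) unfolding rM_equiv_on_def by blast
    show "\<exists>\<phi>. wf Vc \<phi> \<and> qr \<phi> \<le> r \<and> mods \<phi> \<subseteq> M \<and> fv1 \<phi> \<subseteq> D \<and> fv2 \<phi> \<subseteq> D2 \<and>
      sat A \<rho> \<sigma> \<phi> \<and> \<not> sat B (\<rho>' w) (\<sigma>' w) \<phi>"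
    proof (cases "sat A \<rho> \<sigma> \<phi>")
      case True then show ?thesis using \<phi> by (intro exI[of _ \<phi>]) auto
    next
      case False then show ?thesis using \<phi> by (intro exI[of _ "Neg \<phi>"]) auto
    qed
  qed
  then obtain F where F: "\<forall>w\<in>W. wf Vc (F w) \<and> qr (F w) \<le> r \<and> mods (F w) \<subseteq> M \<and>
      fv1 (F w) \<subseteq> D \<and> fv2 (F w) \<subseteq> D2 \<and> sat A \<rho> \<sigma> (F w) \<and> \<not> sat B (\<rho>' w) (\<sigma>' w) (F w)"
    by metis
  obtain ws where "set ws = W" using finite_list[OF assms(1)] by blast
  then show ?thesis
    using F by (intro exI[of _ "foldr Conj (map F ws) fm_true"]) (auto simp: foldr_Conj_simps)
qed

lemma rM_equiv_on_forth_elem: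
  assumes E: "rM_equiv_on Vc (Suc r) M D D2 A \<rho> \<sigma> B \<rho>' \<sigma>'"
    and "finite (univ B)" and u: "u \<in> univ A"
  shows "\<exists>w\<in>univ B. rM_equiv_on Vc r M (insert i D) D2 A (\<rho>(i:=u)) \<sigma> B (\<rho>'(i:=w)) \<sigma>'"
proof (rule ccontr)
  assume "\<not> ?thesis"
  then obtain \<Phi> where \<Phi>: "wf Vc \<Phi>" "qr \<Phi> \<le> r" "mods \<Phi> \<subseteq> M" "fv1 \<Phi> \<subseteq> insert i D" "fv2 \<Phi> \<subseteq> D2"
    "sat A (\<rho>(i:=u)) \<sigma> \<Phi>" "\<forall>w\<in>univ B. \<not> sat B (\<rho>'(i:=w)) \<sigma>' \<Phi>"
    using rM_equiv_on_finite_separation[OF \<open>finite (univ B)\<close>, of Vc r M "insert i D" D2 A "\<rho>(i:=u)" \<sigma> B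
        "\<lambda>w. \<rho>'(i:=w)" "\<lambda>_. \<sigma>'"]
    by blast
  have "sat A \<rho> \<sigma> (Ex1 i \<Phi>)" using \<Phi> u by auto
  moreover have "sat A \<rho> \<sigma> (Ex1 i \<Phi>) \<longleftrightarrow> sat B \<rho>' \<sigma>' (Ex1 i \<Phi>)"
    using \<Phi> by (intro rM_equiv_onD[OF E]) auto
  ultimately show False using \<Phi> by auto
qed

lemma rM_equiv_on_forth_set:
  assumes E: "rM_equiv_on Vc (Suc r) M D D2 A \<rho> \<sigma> B \<rho>' \<sigma>'"
    and "finite (univ B)" and U: "U \<subseteq> univ A"
  shows "\<exists>W\<subseteq>univ B. rM_equiv_on Vc r M D (insert j D2) A \<rho> (\<sigma>(j:=U)) B \<rho>' (\<sigma>'(j:=W))"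
proof (rule ccontr)
  assume "\<not> ?thesis"
  then obtain \<Phi> where \<Phi>: "wf Vc \<Phi>" "qr \<Phi> \<le> r" "mods \<Phi> \<subseteq> M" "fv1 \<Phi> \<subseteq> D" "fv2 \<Phi> \<subseteq> insert j D2"
    "sat A \<rho> (\<sigma>(j:=U)) \<Phi>" "\<forall>W\<in>Pow (univ B). \<not> sat B \<rho>' (\<sigma>'(j:=W)) \<Phi>"
    using rM_equiv_on_finite_separation[of "Pow (univ B)" Vc r M D "insert j D2" A \<rho> "\<sigma>(j:=U)" B
        "\<lambda>_. \<rho>'" "\<lambda>W. \<sigma>'(j:=W)"] \<open>finite (univ B)\<close>
    by blast
  have "sat A \<rho> \<sigma> (Ex2 j \<Phi>)" using \<Phi> U by auto
  moreover have "sat A \<rho> \<sigma> (Ex2 j \<Phi>) \<longleftrightarrow> sat B \<rho>' \<sigma>' (Ex2 j \<Phi>)"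
    using \<Phi> by (intro rM_equiv_onD[OF E]) auto
  ultimately show False using \<Phi> by auto
qed

section \<open>Gluing models along a hypergraph\<close>

text \<open>Elements of the glued model are laid out exactly like the universe of
  \<open>model_of (flatten G \<eta>)\<close>: outer vertices \<open>Inl (Inl g)\<close>, and the element \<open>x\<close> of the component
  of the hyperedge \<open>e\<close> becomes \<open>Inl (Inr (e, v))\<close> for \<open>x = Inl v\<close> and \<open>Inr (e, f)\<close> for \<open>x = Inr f\<close>.\<close>

type_synonym ('vg, 'eg, 'v, 'e) glued = "('vg + 'eg \<times> 'v) + ('eg \<times> 'e)"

fun inner :: "'eg \<Rightarrow> 'v + 'e \<Rightarrow> ('vg, 'eg, 'v, 'e) glued" where
  "inner e (Inl v) = Inl (Inr (e, v))"
| "inner e (Inr f) = Inr (e, f)"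

definition outer :: "'vg \<Rightarrow> ('vg, 'eg, 'v, 'e) glued" where
  "outer g = Inl (Inl g)"

fun is_outer :: "('vg, 'eg, 'v, 'e) glued \<Rightarrow> bool" where
  "is_outer (Inl (Inl g)) = True"
| "is_outer _ = False"

fun edge_of :: "('vg, 'eg, 'v, 'e) glued \<Rightarrow> 'eg" where
  "edge_of (Inl (Inr (e, v))) = e"
| "edge_of (Inr (e, f)) = e"
| "edge_of (Inl (Inl g)) = undefined"

fun elem_of :: "('vg, 'eg, 'v, 'e) glued \<Rightarrow> 'v + 'e" where
  "elem_of (Inl (Inr (e, v))) = Inl v"
| "elem_of (Inr (e, f)) = Inr f"
| "elem_of (Inl (Inl g)) = undefined"

lemma inner_eq_iff [simp]: "inner e x = inner e' y \<longleftrightarrow> e = e' \<and> x = y"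
  by (cases x; cases y) auto

lemma outer_eq_iff [simp]: "outer g = outer g' \<longleftrightarrow> g = g'"
  by (auto simp: outer_def)

lemma inner_simps [simp]:
  "\<not> is_outer (inner e x)" "edge_of (inner e x) = e" "elem_of (inner e x) = x"
  "inner e x \<noteq> outer g" "outer g \<noteq> inner e x" "is_outer (outer g)"
  by (cases x; simp add: outer_def)+

lemma outer_neq_not_outer [simp]: "\<not> is_outer u \<Longrightarrow> outer g \<noteq> u" "\<not> is_outer u \<Longrightarrow> u \<noteq> outer g"
  by (auto simp: outer_def)

lemma inner_edge_of_elem_of: "\<not> is_outer u \<Longrightarrow> inner (edge_of u) (elem_of u) = u"
  by (cases u rule: is_outer.cases) auto

lemma not_outer_eq_iff:
  "\<not> is_outer u \<Longrightarrow> \<not> is_outer v \<Longrightarrow> u = v \<longleftrightarrow> edge_of u = edge_of v \<and> elem_of u = elem_of v"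
  by (metis inner_edge_of_elem_of)

lemma is_outerE: "is_outer u \<Longrightarrow> (\<And>g. u = outer g \<Longrightarrow> P) \<Longrightarrow> P"
  by (cases u rule: is_outer.cases) (auto simp: outer_def)

context
  fixes G :: "('vg, 'eg, 'x) hg" and arX :: "'x \<Rightarrow> nat"
begin

definition ports :: "('x \<Rightarrow> ('u, 'a) model) \<Rightarrow> 'eg \<Rightarrow> 'u set" where
  "ports A e = cnst (A (lab G e)) ` {1..arX (lab G e)}"

definition glue :: "('x \<Rightarrow> ('v + 'e, 'a) model) \<Rightarrow> (('vg, 'eg, 'v, 'e) glued, 'a) model" where
  "glue A =
    \<lparr> univ = outer ` verts G \<union> (\<Union>e\<in>edges G. inner e ` (univ (A (lab G e)) - ports A e)),
      labrel = (\<lambda>a. \<Union>e\<in>edges G. inner e ` labrel (A (lab G e)) a),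
      increl = (\<lambda>i.
        {(inner e x, inner e y) | e x y.
           e \<in> edges G \<and> (x, y) \<in> increl (A (lab G e)) i \<and> y \<notin> ports A e} \<union>
        {(inner e x, outer (inc G e ! (k - 1))) | e x k.
           e \<in> edges G \<and> k \<in> {1..arX (lab G e)} \<and> (x, cnst (A (lab G e)) k) \<in> increl (A (lab G e)) i}),
      cnst = (\<lambda>j. outer (srcs G ! (j - 1))) \<rparr>"

lemma outer_in_univ_glue: "is_outer u \<Longrightarrow> u \<in> univ (glue A) \<longleftrightarrow> u \<in> outer ` verts G"
  by (auto simp: glue_def)

lemma inner_in_univ_glue:
  "inner e x \<in> univ (glue A) \<longleftrightarrow> e \<in> edges G \<and> x \<in> univ (A (lab G e)) \<and> x \<notin> ports A e"
  by (auto simp: glue_def)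

lemma not_outer_in_univ_glue:
  "\<not> is_outer u \<Longrightarrow> u \<in> univ (glue A) \<longleftrightarrow>
     edge_of u \<in> edges G \<and> elem_of u \<in> univ (A (lab G (edge_of u))) \<and> elem_of u \<notin> ports A (edge_of u)"
  by (metis inner_in_univ_glue inner_edge_of_elem_of)

lemma outer_notin_labrel_glue: "is_outer u \<Longrightarrow> u \<notin> labrel (glue A) a"
  by (auto simp: glue_def)

lemma inner_in_labrel_glue:
  "inner e x \<in> labrel (glue A) a \<longleftrightarrow> e \<in> edges G \<and> x \<in> labrel (A (lab G e)) a"
  by (auto simp: glue_def)

lemma not_outer_in_labrel_glue:
  "\<not> is_outer u \<Longrightarrow> u \<in> labrel (glue A) a \<longleftrightarrow>
     edge_of u \<in> edges G \<and> elem_of u \<in> labrel (A (lab G (edge_of u))) a"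
  by (metis inner_in_labrel_glue inner_edge_of_elem_of)

lemma outer_notin_increl_glue: "is_outer u \<Longrightarrow> (u, v) \<notin> increl (glue A) i"
  by (auto simp: glue_def)

lemma inner_in_increl_glue:
  "(inner e x, inner e' y) \<in> increl (glue A) i \<longleftrightarrow>
     e = e' \<and> e \<in> edges G \<and> (x, y) \<in> increl (A (lab G e)) i \<and> y \<notin> ports A e"
  by (auto simp: glue_def)

lemma inner_outer_in_increl_glue:
  "(inner e x, outer g) \<in> increl (glue A) i \<longleftrightarrow> e \<in> edges G \<and>
     (\<exists>k\<in>{1..arX (lab G e)}. inc G e ! (k - 1) = g \<and> (x, cnst (A (lab G e)) k) \<in> increl (A (lab G e)) i)"
  by (auto simp: glue_def)

lemma not_outer_in_increl_glue:
  "\<not> is_outer u \<Longrightarrow> \<not> is_outer v \<Longrightarrow> (u, v) \<in> increl (glue A) i \<longleftrightarrow>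
     edge_of u = edge_of v \<and> edge_of u \<in> edges G \<and>
     (elem_of u, elem_of v) \<in> increl (A (lab G (edge_of u))) i \<and> elem_of v \<notin> ports A (edge_of u)"
  by (metis inner_in_increl_glue inner_edge_of_elem_of)

lemma not_outer_outer_in_increl_glue:
  "\<not> is_outer u \<Longrightarrow> (u, outer g) \<in> increl (glue A) i \<longleftrightarrow> edge_of u \<in> edges G \<and>
     (\<exists>k\<in>{1..arX (lab G (edge_of u))}. inc G (edge_of u) ! (k - 1) = g \<and>
        (elem_of u, cnst (A (lab G (edge_of u))) k) \<in> increl (A (lab G (edge_of u))) i)"
  by (metis inner_outer_in_increl_glue inner_edge_of_elem_of)

lemma cnst_glue: "cnst (glue A) j = outer (srcs G ! (j - 1))"
  by (simp add: glue_def)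

lemma finite_univ_glue:
  "finite (verts G) \<Longrightarrow> finite (edges G) \<Longrightarrow> \<forall>e\<in>edges G. finite (univ (A (lab G e)))
    \<Longrightarrow> finite (univ (glue A))"
  by (auto simp: glue_def)

end

section \<open>Decomposition of the glued model\<close>

lemma min_card_2_eq:
  assumes "finite X" "finite Y" "X = {} \<longleftrightarrow> Y = {}" "(\<exists>u. X = {u}) \<longleftrightarrow> (\<exists>u. Y = {u})"
  shows "min (card X) 2 = min (card Y) (2::nat)"
proof -
  have "card X = 0 \<longleftrightarrow> card Y = 0" using assms(1-3) by simp
  moreover have "card X = 1 \<longleftrightarrow> card Y = 1" using assms(4) by (simp add: card_1_singleton_iff)
  ultimately show ?thesis by presburger
qed

lemma min_sum_2_eq:
  assumes "finite E" "\<forall>e\<in>E. min (f e) 2 = min (g e) (2::nat)"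
  shows "min (sum f E) 2 = min (sum g E) 2"
  using assms
proof (induction E rule: finite_induct)
  case (insert x F)
  have trunc: "min (a + b) 2 = min (min a 2 + min b 2) (2::nat)" for a b
    by (simp add: min_def)
  show ?case
    using insert trunc[of "f x" "sum f F"] trunc[of "g x" "sum g F"] by simp
qed simp

context
  fixes G :: "('vg, 'eg, 'x) hg" and arX :: "'x \<Rightarrow> nat"
begin

lemma glued_set_decomp:
  assumes "T \<subseteq> univ (glue G arX A)"
  shows "T = {u\<in>T. is_outer u} \<union> (\<Union>e\<in>edges G. inner e ` (inner e -` T))"
proof (intro equalityI subsetI)
  fix u assume u: "u \<in> T"
  show "u \<in> {u\<in>T. is_outer u} \<union> (\<Union>e\<in>edges G. inner e ` (inner e -` T))"
  proof (cases "is_outer u")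
    case False
    have e: "edge_of u \<in> edges G" using assms u not_outer_in_univ_glue[OF False] by blast
    have "u = inner (edge_of u) (elem_of u)" using inner_edge_of_elem_of[OF False] by simp
    then have "u \<in> inner (edge_of u) ` (inner (edge_of u) -` T)" using u by (metis image_eqI vimageI)
    then show ?thesis using e by blast
  qed (use u in auto)
qed auto

lemma card_glued_set:
  fixes T :: "('vg, 'eg, 'v, 'e) glued set"
  assumes "T \<subseteq> univ (glue G arX A)" "finite T" "finite (edges G)"
  shows "card T = card {u\<in>T. is_outer u} + (\<Sum>e\<in>edges G. card (inner e -` T))"
proof -
  define I :: "('vg, 'eg, 'v, 'e) glued set" where "I = (\<Union>e\<in>edges G. inner e ` (inner e -` T))"
  have fin: "finite (inner e -` T)" for e
    using assms(2) by (rule finite_vimageI) (auto simp: inj_on_def)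
  have "card T = card ({u\<in>T. is_outer u} \<union> I)"
    using glued_set_decomp[OF assms(1)] unfolding I_def by simp
  also have "\<dots> = card {u\<in>T. is_outer u} + card I"
    unfolding I_def using assms fin by (intro card_Un_disjoint) auto
  also have "card I = (\<Sum>e\<in>edges G. card (inner e ` (inner e -` T) :: ('vg, 'eg, 'v, 'e) glued set))"
    unfolding I_def using fin assms(2,3) by (intro card_UN_disjoint) auto
  also have "\<dots> = (\<Sum>e\<in>edges G. card (inner e -` T))"
    by (intro sum.cong refl card_image) (auto simp: inj_on_def)
  finally show ?thesis .
qed

lemma glued_subset_iff:
  assumes "T \<subseteq> univ (glue G arX A)"
  shows "T \<subseteq> T' \<longleftrightarrow>
    {u\<in>T. is_outer u} \<subseteq> {u\<in>T'. is_outer u} \<and> (\<forall>e\<in>edges G. inner e -` T \<subseteq> inner e -` T')"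
proof
  assume "{u\<in>T. is_outer u} \<subseteq> {u\<in>T'. is_outer u} \<and> (\<forall>e\<in>edges G. inner e -` T \<subseteq> inner e -` T')"
  then have "{u\<in>T. is_outer u} \<union> (\<Union>e\<in>edges G. inner e ` (inner e -` T)) \<subseteq> T'" by auto
  with glued_set_decomp[OF assms] show "T \<subseteq> T'" by (simp only:)
qed auto

lemma sat_qf_outer:
  assumes "qf_fo \<psi>" "\<forall>a\<in>fv1 \<psi>. is_outer (\<rho> a) \<and> \<rho> a = \<rho>' a"
  shows "sat (glue G arX A) \<rho> \<sigma> \<psi> \<longleftrightarrow> sat (glue G arX B) \<rho>' \<sigma>' \<psi>"
  using assms
proof (induction \<psi>)
  case (Eq s t) then show ?case by (cases s; cases t) (auto simp: cnst_glue)
next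
  case (LabA a t) then show ?case by (cases t) (auto simp: cnst_glue outer_notin_labrel_glue)
next
  case (IncA i s t) then show ?case by (cases s) (auto simp: cnst_glue outer_notin_increl_glue)
next
  case (Neg \<psi>)
  then have "sat (glue G arX A) \<rho> \<sigma> \<psi> \<longleftrightarrow> sat (glue G arX B) \<rho>' \<sigma>' \<psi>" by (intro Neg.IH) auto
  then show ?case by simp
next
  case (Conj \<psi>1 \<psi>2)
  then have "sat (glue G arX A) \<rho> \<sigma> \<psi>1 \<longleftrightarrow> sat (glue G arX B) \<rho>' \<sigma>' \<psi>1"
    "sat (glue G arX A) \<rho> \<sigma> \<psi>2 \<longleftrightarrow> sat (glue G arX B) \<rho>' \<sigma>' \<psi>2"
    by (intro Conj.IH; auto)+
  then show ?case by simp
qed auto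

text \<open>Translation of a quantifier-free formula whose free variables denote elements of the component
  of \<open>e\<close> into the vocabulary of that component. The constant \<open>j\<close> of the glued model is the outer
  vertex \<open>srcs G ! (j - 1)\<close>, which the component sees through the constants \<open>k\<close> with
  \<open>inc G e ! (k - 1)\<close> equal to it.\<close>

fun comp_fm :: "'eg \<Rightarrow> 'a fm \<Rightarrow> 'a fm" where
  "comp_fm e (Eq (V a) (V b)) = Eq (V a) (V b)"
| "comp_fm e (Eq (C j) (C k)) = (if srcs G ! (j - 1) = srcs G ! (k - 1) then qf_true else qf_false)"
| "comp_fm e (Eq (V a) (C k)) = qf_false"
| "comp_fm e (Eq (C j) (V b)) = qf_false"
| "comp_fm e (LabA l (V b)) = LabA l (V b)"
| "comp_fm e (LabA l (C j)) = qf_false"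
| "comp_fm e (IncA i (V a) (V b)) = IncA i (V a) (V b)"
| "comp_fm e (IncA i (V a) (C j)) =
     foldr Disj (map (\<lambda>k. IncA i (V a) (C k))
       (filter (\<lambda>k. inc G e ! (k - 1) = srcs G ! (j - 1)) [1..<Suc (arX (lab G e))])) qf_false"
| "comp_fm e (IncA i (C j) t) = qf_false"
| "comp_fm e (Neg \<phi>) = Neg (comp_fm e \<phi>)"
| "comp_fm e (Conj \<phi> \<psi>) = Conj (comp_fm e \<phi>) (comp_fm e \<psi>)"
| "comp_fm e (Mem t Y) = qf_false"
| "comp_fm e (Cnt Y k m) = qf_false"
| "comp_fm e (Sub Y Z) = qf_false"
| "comp_fm e (Sng Y) = qf_false"
| "comp_fm e (Ex1 i \<phi>) = qf_false"
| "comp_fm e (Ex2 i \<phi>) = qf_false"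

lemma sat_comp_fm:
  assumes "qf_fo \<psi>" "e \<in> edges G"
    and "\<forall>a\<in>fv1 \<psi>. \<rho> a \<in> univ (glue G arX A) \<and> \<not> is_outer (\<rho> a) \<and> edge_of (\<rho> a) = e"
  shows "sat (glue G arX A) \<rho> \<sigma> \<psi> \<longleftrightarrow> sat (A (lab G e)) (elem_of \<circ> \<rho>) \<sigma>' (comp_fm e \<psi>)"
  using assms
proof (induction e \<psi> rule: comp_fm.induct)
  case (1 e a b) then show ?case by (auto simp: not_outer_eq_iff)
next
  case (5 e l b) then show ?case by (auto simp: not_outer_in_labrel_glue)
next
  case (6 e l j) then show ?case by (auto simp: cnst_glue outer_notin_labrel_glue)
next
  case (7 e i a b) then show ?case by (auto simp: not_outer_in_increl_glue not_outer_in_univ_glue)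
next
  case (8 e i a j)
  then show ?case by (auto simp: cnst_glue not_outer_outer_in_increl_glue foldr_Disj_simps)
next
  case (9 e i j t) then show ?case by (auto simp: cnst_glue outer_notin_increl_glue)
qed (auto simp: cnst_glue)

lemma comp_fm_wf:
  assumes "qf_fo \<psi>" "wf (voc S arS n) \<psi>"
  shows "qf_fo (comp_fm e \<psi>) \<and> wf (voc S arS (arX (lab G e))) (comp_fm e \<psi>) \<and> fv1 (comp_fm e \<psi>) \<subseteq> insert 0 (fv1 \<psi>)"
  using assms
proof (induction e \<psi> rule: comp_fm.induct)
  case (8 e i a j) then show ?case by (auto simp: foldr_Disj_simps voc_def)
qed (auto simp: voc_def)

definition non_port :: "'eg \<Rightarrow> 'a fm" where
  "non_port e = foldr Conj (map (\<lambda>k. Neg (Eq (V 0) (C k))) [1..<Suc (arX (lab G e))]) qf_true"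

lemma non_port_simps:
  "sat (A (lab G e)) \<rho> \<sigma> (non_port e) \<longleftrightarrow> \<rho> 0 \<notin> ports G arX A e"
  "qf_fo (non_port e)" "fv1 (non_port e) = {0}" "wf (voc S arS (arX (lab G e))) (non_port e)"
  by (auto simp: non_port_def foldr_Conj_simps ports_def voc_def)

fun comp_st :: "'eg \<Rightarrow> 'a st \<Rightarrow> 'a st" where
  "comp_st e (SV j) = SV j"
| "comp_st e (SC \<psi>) = SC (Conj (comp_fm e \<psi>) (non_port e))"

lemma comp_st_simps:
  assumes "wfs (voc S arS n) Y"
  shows "wfs (voc S arS (arX (lab G e))) (comp_st e Y)" "fv1s (comp_st e Y) = {}" "fv2s (comp_st e Y) = fv2s Y"
  using assms comp_fm_wf[of _ S arS n e] by (cases Y; auto simp: non_port_simps)+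

lemma vimage_inner_sset:
  assumes "wfs Vc Y" "e \<in> edges G"
  shows "inner e -` sset (glue G arX A) \<rho> \<sigma> Y =
    sset (A (lab G e)) (elem_of \<circ> \<rho>) (\<lambda>j. inner e -` \<sigma> j) (comp_st e Y)"
proof (cases Y)
  case (SC \<psi>)
  have \<psi>: "qf_fo \<psi>" "fv1 \<psi> \<subseteq> {0}" using assms SC by auto
  have "x \<in> inner e -` sset (glue G arX A) \<rho> \<sigma> Y \<longleftrightarrow>
        x \<in> sset (A (lab G e)) (elem_of \<circ> \<rho>) (\<lambda>j. inner e -` \<sigma> j) (comp_st e Y)" for x
  proof -
    have "elem_of \<circ> \<rho>(0 := inner e x) = (elem_of \<circ> \<rho>)(0 := x)" by auto
    moreover have "inner e x \<in> univ (glue G arX A) \<Longrightarrow>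
      sat (glue G arX A) (\<rho>(0 := inner e x)) \<sigma> \<psi> \<longleftrightarrow>
      sat (A (lab G e)) (elem_of \<circ> \<rho>(0 := inner e x)) (\<lambda>j. inner e -` \<sigma> j) (comp_fm e \<psi>)"
      using \<psi> assms(2) by (intro sat_comp_fm) auto
    ultimately show ?thesis using SC assms(2) by (auto simp: inner_in_univ_glue non_port_simps)
  qed
  then show ?thesis by blast
qed simp

end

section \<open>The back-and-forth invariant\<close>

context
  fixes G :: "('vg, 'eg, 'x) hg" and arX :: "'x \<Rightarrow> nat"
    and S :: "'a set" and arS :: "'a \<Rightarrow> nat" and M :: "nat set"
begin

definition vars_in_comp :: "(nat \<Rightarrow> ('vg, 'eg, 'v, 'e) glued) \<Rightarrow> nat set \<Rightarrow> 'eg \<Rightarrow> nat set" where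
  "vars_in_comp \<rho> D e = {i\<in>D. \<not> is_outer (\<rho> i) \<and> edge_of (\<rho> i) = e}"

abbreviation comp_voc :: "'eg \<Rightarrow> 'a voc" where "comp_voc e \<equiv> voc S arS (arX (lab G e))"

text \<open>The component of \<open>e\<close> sees a variable through \<open>elem_of\<close> (only those in \<open>vars_in_comp \<rho> D e\<close>
  are meaningful) and a set through its preimage under \<open>inner e\<close>.\<close>

definition glue_corr :: "('x \<Rightarrow> ('v + 'e, 'a) model) \<Rightarrow> ('x \<Rightarrow> ('v + 'e, 'a) model) \<Rightarrow> nat \<Rightarrow> nat set \<Rightarrow> nat set
   \<Rightarrow> (nat \<Rightarrow> ('vg, 'eg, 'v, 'e) glued) \<Rightarrow> (nat \<Rightarrow> ('vg, 'eg, 'v, 'e) glued set)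
   \<Rightarrow> (nat \<Rightarrow> ('vg, 'eg, 'v, 'e) glued) \<Rightarrow> (nat \<Rightarrow> ('vg, 'eg, 'v, 'e) glued set) \<Rightarrow> bool" where
  "glue_corr A B r D D2 \<rho> \<sigma> \<rho>' \<sigma>' \<longleftrightarrow>
    (\<forall>i\<in>D. \<rho> i \<in> univ (glue G arX A) \<and> \<rho>' i \<in> univ (glue G arX B)) \<and>
    (\<forall>i\<in>D. is_outer (\<rho> i) \<longleftrightarrow> is_outer (\<rho>' i)) \<and>
    (\<forall>i\<in>D. is_outer (\<rho> i) \<longrightarrow> \<rho> i = \<rho>' i) \<and>
    (\<forall>i\<in>D. \<not> is_outer (\<rho> i) \<longrightarrow> edge_of (\<rho> i) = edge_of (\<rho>' i)) \<and>
    (\<forall>j\<in>D2. \<sigma> j \<subseteq> univ (glue G arX A) \<and> \<sigma>' j \<subseteq> univ (glue G arX B) \<and> {u\<in>\<sigma> j. is_outer u} = {u\<in>\<sigma>' j. is_outer u}) \<and>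
    (\<forall>e\<in>edges G. rM_equiv_on (comp_voc e) r M (vars_in_comp \<rho> D e) D2 (A (lab G e)) (elem_of \<circ> \<rho>) (\<lambda>j. inner e -` \<sigma> j)
        (B (lab G e)) (elem_of \<circ> \<rho>') (\<lambda>j. inner e -` \<sigma>' j))"

lemma glue_corrD:
  assumes "glue_corr A B r D D2 \<rho> \<sigma> \<rho>' \<sigma>'"
  shows "\<forall>i\<in>D. \<rho> i \<in> univ (glue G arX A) \<and> \<rho>' i \<in> univ (glue G arX B)"
    "\<forall>i\<in>D. is_outer (\<rho> i) \<longleftrightarrow> is_outer (\<rho>' i)"
    "\<forall>i\<in>D. is_outer (\<rho> i) \<longrightarrow> \<rho> i = \<rho>' i"
    "\<forall>i\<in>D. \<not> is_outer (\<rho> i) \<longrightarrow> edge_of (\<rho> i) = edge_of (\<rho>' i)"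
    "\<forall>j\<in>D2. \<sigma> j \<subseteq> univ (glue G arX A) \<and> \<sigma>' j \<subseteq> univ (glue G arX B) \<and> {u\<in>\<sigma> j. is_outer u} = {u\<in>\<sigma>' j. is_outer u}"
    "\<forall>e\<in>edges G. rM_equiv_on (comp_voc e) r M (vars_in_comp \<rho> D e) D2 (A (lab G e)) (elem_of \<circ> \<rho>) (\<lambda>j. inner e -` \<sigma> j)
        (B (lab G e)) (elem_of \<circ> \<rho>') (\<lambda>j. inner e -` \<sigma>' j)"
  using assms unfolding glue_corr_def by blast+

lemma glue_corrI:
  assumes "\<forall>i\<in>D. \<rho> i \<in> univ (glue G arX A) \<and> \<rho>' i \<in> univ (glue G arX B)"
    "\<forall>i\<in>D. is_outer (\<rho> i) \<longleftrightarrow> is_outer (\<rho>' i)"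
    "\<forall>i\<in>D. is_outer (\<rho> i) \<longrightarrow> \<rho> i = \<rho>' i"
    "\<forall>i\<in>D. \<not> is_outer (\<rho> i) \<longrightarrow> edge_of (\<rho> i) = edge_of (\<rho>' i)"
    "\<forall>j\<in>D2. \<sigma> j \<subseteq> univ (glue G arX A) \<and> \<sigma>' j \<subseteq> univ (glue G arX B) \<and> {u\<in>\<sigma> j. is_outer u} = {u\<in>\<sigma>' j. is_outer u}"
    "\<forall>e\<in>edges G. rM_equiv_on (comp_voc e) r M (vars_in_comp \<rho> D e) D2 (A (lab G e)) (elem_of \<circ> \<rho>) (\<lambda>j. inner e -` \<sigma> j)
        (B (lab G e)) (elem_of \<circ> \<rho>') (\<lambda>j. inner e -` \<sigma>' j)"
  shows "glue_corr A B r D D2 \<rho> \<sigma> \<rho>' \<sigma>'"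
  unfolding glue_corr_def using assms by (intro conjI)

lemma glue_corr_sym:
  assumes "glue_corr A B r D D2 \<rho> \<sigma> \<rho>' \<sigma>'"
  shows "glue_corr B A r D D2 \<rho>' \<sigma>' \<rho> \<sigma>"
proof -
  have vars: "vars_in_comp \<rho>' D e = vars_in_comp \<rho> D e" for e
    using glue_corrD(2,4)[OF assms] unfolding vars_in_comp_def by auto
  show ?thesis
  proof (rule glue_corrI)
    show "\<forall>e\<in>edges G. rM_equiv_on (comp_voc e) r M (vars_in_comp \<rho>' D e) D2
      (B (lab G e)) (elem_of \<circ> \<rho>') (\<lambda>j. inner e -` \<sigma>' j) (A (lab G e)) (elem_of \<circ> \<rho>) (\<lambda>j. inner e -` \<sigma> j)"
      using glue_corrD(6)[OF assms] by (simp add: vars rM_equiv_on_sym)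
  qed (use glue_corrD[OF assms] in auto)
qed

lemma glue_corr_comp_sat:
  assumes I: "glue_corr A B r D D2 \<rho> \<sigma> \<rho>' \<sigma>'" and e: "e \<in> edges G"
    and "wf (comp_voc e) \<chi>" "qr \<chi> \<le> r" "mods \<chi> \<subseteq> M" "fv1 \<chi> \<subseteq> vars_in_comp \<rho> D e" "fv2 \<chi> \<subseteq> D2"
  shows "sat (A (lab G e)) (elem_of \<circ> \<rho>) (\<lambda>j. inner e -` \<sigma> j) \<chi> \<longleftrightarrow>
         sat (B (lab G e)) (elem_of \<circ> \<rho>') (\<lambda>j. inner e -` \<sigma>' j) \<chi>"
proof -
  have "rM_equiv_on (comp_voc e) r M (vars_in_comp \<rho> D e) D2 (A (lab G e)) (elem_of \<circ> \<rho>) (\<lambda>j. inner e -` \<sigma> j)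
        (B (lab G e)) (elem_of \<circ> \<rho>') (\<lambda>j. inner e -` \<sigma>' j)" using glue_corrD(6)[OF I] e by blast
  from rM_equiv_onD[OF this assms(3)] show ?thesis using assms(4-7) by simp
qed

lemma glue_corr_tm_cases:
  assumes I: "glue_corr A B r D D2 \<rho> \<sigma> \<rho>' \<sigma>'" and t: "tvars t \<subseteq> D"
  obtains (outer) "is_outer (tm (glue G arX A) \<rho> t)" "tm (glue G arX B) \<rho>' t = tm (glue G arX A) \<rho> t"
  | (inner) i e x x' where "t = V i" "e \<in> edges G" "i \<in> vars_in_comp \<rho> D e"
      "\<rho> i = inner e x" "\<rho>' i = inner e x'" "x \<notin> ports G arX A e" "x' \<notin> ports G arX B e"
proof (cases t)
  case (C j) then show ?thesis by (intro outer) (simp_all add: cnst_glue)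
next
  case (V i)
  then have iD: "i \<in> D" using t by simp
  show ?thesis
  proof (cases "is_outer (\<rho> i)")
    case True then show ?thesis using V glue_corrD(3)[OF I] iD by (intro outer) simp_all
  next
    case False
    define e where "e = edge_of (\<rho> i)"
    have \<rho>': "\<not> is_outer (\<rho>' i)" "edge_of (\<rho>' i) = e" using False glue_corrD(2,4)[OF I] iD e_def by auto
    show ?thesis
    proof (rule inner[OF V])
      show "e \<in> edges G" "elem_of (\<rho> i) \<notin> ports G arX A e" "elem_of (\<rho>' i) \<notin> ports G arX B e"
        using glue_corrD(1)[OF I] iD False \<rho>' by (auto simp: e_def not_outer_in_univ_glue)
      show "i \<in> vars_in_comp \<rho> D e" using iD False unfolding vars_in_comp_def e_def by simp
      show "\<rho> i = inner e (elem_of (\<rho> i))" "\<rho>' i = inner e (elem_of (\<rho>' i))"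
        using inner_edge_of_elem_of False \<rho>' e_def by metis+
    qed
  qed
qed

lemma glue_corr_sat_Eq:
  assumes I: "glue_corr A B r D D2 \<rho> \<sigma> \<rho>' \<sigma>'" and "tvars s \<union> tvars t \<subseteq> D"
  shows "sat (glue G arX A) \<rho> \<sigma> (Eq s t) \<longleftrightarrow> sat (glue G arX B) \<rho>' \<sigma>' (Eq s t)"
proof -
  have s: "tvars s \<subseteq> D" and t: "tvars t \<subseteq> D" using assms(2) by auto
  show ?thesis
  proof (cases rule: glue_corr_tm_cases[OF I s, case_names outer inner])
    case s_outer: outer
    show ?thesis by (cases rule: glue_corr_tm_cases[OF I t, case_names outer inner]) (use s_outer in auto)
  next
    case s_inner: (inner i e x x')
    show ?thesis
    proof (cases rule: glue_corr_tm_cases[OF I t, case_names outer inner])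
      case outer then show ?thesis using s_inner by (metis inner_simps(1) sat.simps(1) tm.simps(1))
    next
      case (inner j e' y y')
      have "x = y \<longleftrightarrow> x' = y'" if "e' = e"
        using glue_corr_comp_sat[OF I s_inner(2), of "Eq (V i) (V j)"] s_inner inner that by auto
      then show ?thesis using s_inner inner by auto
    qed
  qed
qed

lemma glue_corr_sat_LabA:
  assumes I: "glue_corr A B r D D2 \<rho> \<sigma> \<rho>' \<sigma>'" and t: "tvars t \<subseteq> D" and "a \<in> S"
  shows "sat (glue G arX A) \<rho> \<sigma> (LabA a t) \<longleftrightarrow> sat (glue G arX B) \<rho>' \<sigma>' (LabA a t)"
proof (cases rule: glue_corr_tm_cases[OF I t, case_names outer inner])
  case outer then show ?thesis by (simp add: outer_notin_labrel_glue)
next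
  case (inner i e x x')
  have "x \<in> labrel (A (lab G e)) a \<longleftrightarrow> x' \<in> labrel (B (lab G e)) a"
    using glue_corr_comp_sat[OF I inner(2), of "LabA a (V i)"] inner \<open>a \<in> S\<close> by (auto simp: voc_def)
  then show ?thesis using inner by (simp add: inner_in_labrel_glue)
qed

lemma glue_corr_sat_IncA:
  assumes I: "glue_corr A B r D D2 \<rho> \<sigma> \<rho>' \<sigma>'" and "tvars s \<union> tvars t \<subseteq> D" and k: "k \<in> {1..maxar S arS}"
  shows "sat (glue G arX A) \<rho> \<sigma> (IncA k s t) \<longleftrightarrow> sat (glue G arX B) \<rho>' \<sigma>' (IncA k s t)"
proof -
  have s: "tvars s \<subseteq> D" and t: "tvars t \<subseteq> D" using assms(2) by auto
  show ?thesis
  proof (cases rule: glue_corr_tm_cases[OF I s, case_names outer inner])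
    case outer then show ?thesis by (simp add: outer_notin_increl_glue)
  next
    case s_inner: (inner i e x x')
    note e = s_inner(2)
    show ?thesis
    proof (cases rule: glue_corr_tm_cases[OF I t, case_names outer inner])
      case outer
      then obtain g where g: "tm (glue G arX A) \<rho> t = outer g" "tm (glue G arX B) \<rho>' t = outer g"
        by (metis is_outerE)
      define \<chi> :: "'a fm" where "\<chi> = foldr Disj (map (\<lambda>k'. IncA k (V i) (C k'))
        (filter (\<lambda>k'. inc G e ! (k' - 1) = g) [1..<Suc (arX (lab G e))])) (Neg fm_true)"
      have "sat (A (lab G e)) (elem_of \<circ> \<rho>) (\<lambda>j. inner e -` \<sigma> j) \<chi> \<longleftrightarrow>
            sat (B (lab G e)) (elem_of \<circ> \<rho>') (\<lambda>j. inner e -` \<sigma>' j) \<chi>"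
        using s_inner k unfolding \<chi>_def by (intro glue_corr_comp_sat[OF I e]) (auto simp: voc_def foldr_Disj_simps)
      moreover have "sat (A (lab G e)) (elem_of \<circ> \<rho>) \<sigma>0 \<chi> \<longleftrightarrow> (inner e x, outer g) \<in> increl (glue G arX A) k"
        and "sat (B (lab G e)) (elem_of \<circ> \<rho>') \<sigma>0 \<chi> \<longleftrightarrow> (inner e x', outer g) \<in> increl (glue G arX B) k" for \<sigma>0
        unfolding \<chi>_def inner_outer_in_increl_glue using s_inner by (auto simp: foldr_Disj_simps)
      ultimately show ?thesis using g s_inner by simp
    next
      case (inner j e' y y')
      have "(x, y) \<in> increl (A (lab G e)) k \<longleftrightarrow> (x', y') \<in> increl (B (lab G e)) k" if "e' = e"
        using glue_corr_comp_sat[OF I e, of "IncA k (V i) (V j)"] s_inner inner that k by (auto simp: voc_def)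
      then show ?thesis using s_inner inner by (auto simp: inner_in_increl_glue)
    qed
  qed
qed

lemma glue_corr_sset_subset:
  assumes I: "glue_corr A B r D D2 \<rho> \<sigma> \<rho>' \<sigma>'" and "fv2s Y \<subseteq> D2"
  shows "sset (glue G arX A) \<rho> \<sigma> Y \<subseteq> univ (glue G arX A)"
  using glue_corrD(5)[OF I] assms(2) by (cases Y) auto

lemma glue_corr_sset_outer:
  assumes I: "glue_corr A B r D D2 \<rho> \<sigma> \<rho>' \<sigma>'" and "fv2s Y \<subseteq> D2" "wfs Vc Y"
  shows "{u\<in>sset (glue G arX A) \<rho> \<sigma> Y. is_outer u} = {u\<in>sset (glue G arX B) \<rho>' \<sigma>' Y. is_outer u}"
proof (cases Y)
  case (SV j) then show ?thesis using glue_corrD(5)[OF I] assms(2) by auto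
next
  case (SC \<psi>)
  have q: "qf_fo \<psi>" "fv1 \<psi> \<subseteq> {0}" using assms SC by auto
  have "is_outer u \<Longrightarrow> sat (glue G arX A) (\<rho>(0:=u)) \<sigma> \<psi> \<longleftrightarrow> sat (glue G arX B) (\<rho>'(0:=u)) \<sigma>' \<psi>" for u
    using q by (intro sat_qf_outer) auto
  then show ?thesis using SC by (auto simp: outer_in_univ_glue)
qed

lemma glue_corr_sat_Mem:
  assumes I: "glue_corr A B r D D2 \<rho> \<sigma> \<rho>' \<sigma>'" and t: "tvars t \<subseteq> D"
    and Y: "wfs (voc S arS n) Y" "fv2s Y \<subseteq> D2"
  shows "sat (glue G arX A) \<rho> \<sigma> (Mem t Y) \<longleftrightarrow> sat (glue G arX B) \<rho>' \<sigma>' (Mem t Y)"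
proof (cases rule: glue_corr_tm_cases[OF I t, case_names outer inner])
  case outer
  then show ?thesis using glue_corr_sset_outer[OF I Y(2,1)] by (metis (no_types, lifting) mem_Collect_eq sat.simps(4))
next
  case (inner i e x x')
  have "x \<in> inner e -` sset (glue G arX A) \<rho> \<sigma> Y \<longleftrightarrow> x' \<in> inner e -` sset (glue G arX B) \<rho>' \<sigma>' Y"
    using glue_corr_comp_sat[OF I inner(2), of "Mem (V i) (comp_st G arX e Y)"] inner Y
    by (auto simp: vimage_inner_sset[OF Y(1) inner(2)] comp_st_simps[OF Y(1)])
  then show ?thesis using inner by simp
qed

lemma glue_corr_sat_Sub:
  assumes I: "glue_corr A B r D D2 \<rho> \<sigma> \<rho>' \<sigma>'"
    and Y: "wfs (voc S arS n) Y" "fv2s Y \<subseteq> D2" and Z: "wfs (voc S arS n) Z" "fv2s Z \<subseteq> D2"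
  shows "sat (glue G arX A) \<rho> \<sigma> (Sub Y Z) \<longleftrightarrow> sat (glue G arX B) \<rho>' \<sigma>' (Sub Y Z)"
proof -
  have GY: "{u\<in>sset (glue G arX A) \<rho> \<sigma> Y. is_outer u} = {u\<in>sset (glue G arX B) \<rho>' \<sigma>' Y. is_outer u}"
    by (rule glue_corr_sset_outer[OF I Y(2) Y(1)])
  have GZ: "{u\<in>sset (glue G arX A) \<rho> \<sigma> Z. is_outer u} = {u\<in>sset (glue G arX B) \<rho>' \<sigma>' Z. is_outer u}"
    by (rule glue_corr_sset_outer[OF I Z(2) Z(1)])
  have c: "inner e -` sset (glue G arX A) \<rho> \<sigma> Y \<subseteq> inner e -` sset (glue G arX A) \<rho> \<sigma> Z \<longleftrightarrow>
           inner e -` sset (glue G arX B) \<rho>' \<sigma>' Y \<subseteq> inner e -` sset (glue G arX B) \<rho>' \<sigma>' Z" if e: "e \<in> edges G" for e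
  proof -
    have "sat (A (lab G e)) (elem_of \<circ> \<rho>) (\<lambda>j. inner e -` \<sigma> j) (Sub (comp_st G arX e Y) (comp_st G arX e Z)) \<longleftrightarrow>
          sat (B (lab G e)) (elem_of \<circ> \<rho>') (\<lambda>j. inner e -` \<sigma>' j) (Sub (comp_st G arX e Y) (comp_st G arX e Z))"
      using e Y(2) Z(2) by (intro glue_corr_comp_sat[OF I]) (auto simp: comp_st_simps[OF Y(1)] comp_st_simps[OF Z(1)])
    then show ?thesis by (simp only: vimage_inner_sset[OF Y(1) e] vimage_inner_sset[OF Z(1) e]) simp
  qed
  have "sat (glue G arX A) \<rho> \<sigma> (Sub Y Z) \<longleftrightarrow>
     {u\<in>sset (glue G arX A) \<rho> \<sigma> Y. is_outer u} \<subseteq> {u\<in>sset (glue G arX A) \<rho> \<sigma> Z. is_outer u} \<and>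
     (\<forall>e\<in>edges G. inner e -` sset (glue G arX A) \<rho> \<sigma> Y \<subseteq> inner e -` sset (glue G arX A) \<rho> \<sigma> Z)"
    using glued_subset_iff[OF glue_corr_sset_subset[OF I Y(2)]] by simp
  also have "\<dots> \<longleftrightarrow>
     {u\<in>sset (glue G arX B) \<rho>' \<sigma>' Y. is_outer u} \<subseteq> {u\<in>sset (glue G arX B) \<rho>' \<sigma>' Z. is_outer u} \<and>
     (\<forall>e\<in>edges G. inner e -` sset (glue G arX B) \<rho>' \<sigma>' Y \<subseteq> inner e -` sset (glue G arX B) \<rho>' \<sigma>' Z)"
    unfolding GY GZ using c by blast
  also have "\<dots> \<longleftrightarrow> sat (glue G arX B) \<rho>' \<sigma>' (Sub Y Z)"
    using glued_subset_iff[OF glue_corr_sset_subset[OF glue_corr_sym[OF I] Y(2)]] by simp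
  finally show ?thesis .
qed

lemma glue_corr_card_sset:
  assumes I: "glue_corr A B r D D2 \<rho> \<sigma> \<rho>' \<sigma>'"
    and Y: "wfs (voc S arS n) Y" "fv2s Y \<subseteq> D2"
    and fin: "finite (univ (glue G arX A))" "finite (univ (glue G arX B))" "finite (edges G)"
  shows "finite (sset (glue G arX A) \<rho> \<sigma> Y)" "finite (sset (glue G arX B) \<rho>' \<sigma>' Y)"
    "card (sset (glue G arX A) \<rho> \<sigma> Y) = card {u\<in>sset (glue G arX A) \<rho> \<sigma> Y. is_outer u} + (\<Sum>e\<in>edges G. card (inner e -` sset (glue G arX A) \<rho> \<sigma> Y))"
    "card (sset (glue G arX B) \<rho>' \<sigma>' Y) = card {u\<in>sset (glue G arX A) \<rho> \<sigma> Y. is_outer u} + (\<Sum>e\<in>edges G. card (inner e -` sset (glue G arX B) \<rho>' \<sigma>' Y))"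
    "\<And>e. finite (inner e -` sset (glue G arX A) \<rho> \<sigma> Y)" "\<And>e. finite (inner e -` sset (glue G arX B) \<rho>' \<sigma>' Y)"
proof -
  have s1: "sset (glue G arX A) \<rho> \<sigma> Y \<subseteq> univ (glue G arX A)" by (rule glue_corr_sset_subset[OF I Y(2)])
  have s2: "sset (glue G arX B) \<rho>' \<sigma>' Y \<subseteq> univ (glue G arX B)" by (rule glue_corr_sset_subset[OF glue_corr_sym[OF I] Y(2)])
  show f1: "finite (sset (glue G arX A) \<rho> \<sigma> Y)" using s1 fin(1) by (rule finite_subset)
  show f2: "finite (sset (glue G arX B) \<rho>' \<sigma>' Y)" using s2 fin(2) by (rule finite_subset)
  show "card (sset (glue G arX A) \<rho> \<sigma> Y) = card {u\<in>sset (glue G arX A) \<rho> \<sigma> Y. is_outer u} + (\<Sum>e\<in>edges G. card (inner e -` sset (glue G arX A) \<rho> \<sigma> Y))"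
    by (rule card_glued_set[OF s1 f1 fin(3)])
  show "card (sset (glue G arX B) \<rho>' \<sigma>' Y) = card {u\<in>sset (glue G arX A) \<rho> \<sigma> Y. is_outer u} + (\<Sum>e\<in>edges G. card (inner e -` sset (glue G arX B) \<rho>' \<sigma>' Y))"
    unfolding glue_corr_sset_outer[OF I Y(2) Y(1)] by (rule card_glued_set[OF s2 f2 fin(3)])
  show "\<And>e. finite (inner e -` sset (glue G arX A) \<rho> \<sigma> Y)" using f1 by (rule finite_vimageI) (auto simp: inj_on_def)
  show "\<And>e. finite (inner e -` sset (glue G arX B) \<rho>' \<sigma>' Y)" using f2 by (rule finite_vimageI) (auto simp: inj_on_def)
qed

lemma glue_corr_sat_Sng:
  assumes I: "glue_corr A B r D D2 \<rho> \<sigma> \<rho>' \<sigma>'"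
    and Y: "wfs (voc S arS n) Y" "fv2s Y \<subseteq> D2"
    and fin: "finite (univ (glue G arX A))" "finite (univ (glue G arX B))" "finite (edges G)"
  shows "sat (glue G arX A) \<rho> \<sigma> (Sng Y) \<longleftrightarrow> sat (glue G arX B) \<rho>' \<sigma>' (Sng Y)"
proof -
  note cc = glue_corr_card_sset[OF I Y fin]
  have m: "min (card (inner e -` sset (glue G arX A) \<rho> \<sigma> Y)) 2 = min (card (inner e -` sset (glue G arX B) \<rho>' \<sigma>' Y)) 2"
    if e: "e \<in> edges G" for e
  proof (rule min_card_2_eq[OF cc(5) cc(6)])
    have "sat (A (lab G e)) (elem_of \<circ> \<rho>) (\<lambda>j. inner e -` \<sigma> j) (Sub (comp_st G arX e Y) (SC qf_false)) \<longleftrightarrow>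
          sat (B (lab G e)) (elem_of \<circ> \<rho>') (\<lambda>j. inner e -` \<sigma>' j) (Sub (comp_st G arX e Y) (SC qf_false))"
      using e Y(2) by (intro glue_corr_comp_sat[OF I]) (auto simp: comp_st_simps[OF Y(1)])
    then show "inner e -` sset (glue G arX A) \<rho> \<sigma> Y = {} \<longleftrightarrow> inner e -` sset (glue G arX B) \<rho>' \<sigma>' Y = {}"
      using vimage_inner_sset[OF Y(1) e, where A=A and \<rho>=\<rho> and \<sigma>=\<sigma>] vimage_inner_sset[OF Y(1) e, where A=B and \<rho>=\<rho>' and \<sigma>=\<sigma>'] by simp
    have "sat (A (lab G e)) (elem_of \<circ> \<rho>) (\<lambda>j. inner e -` \<sigma> j) (Sng (comp_st G arX e Y)) \<longleftrightarrow>
          sat (B (lab G e)) (elem_of \<circ> \<rho>') (\<lambda>j. inner e -` \<sigma>' j) (Sng (comp_st G arX e Y))"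
      using e Y(2) by (intro glue_corr_comp_sat[OF I]) (auto simp: comp_st_simps[OF Y(1)])
    then show "(\<exists>u. inner e -` sset (glue G arX A) \<rho> \<sigma> Y = {u}) \<longleftrightarrow> (\<exists>u. inner e -` sset (glue G arX B) \<rho>' \<sigma>' Y = {u})"
      using vimage_inner_sset[OF Y(1) e, where A=A and \<rho>=\<rho> and \<sigma>=\<sigma>] vimage_inner_sset[OF Y(1) e, where A=B and \<rho>=\<rho>' and \<sigma>=\<sigma>'] by simp
  qed
  have "sat (glue G arX A) \<rho> \<sigma> (Sng Y) \<longleftrightarrow> card (sset (glue G arX A) \<rho> \<sigma> Y) = 1"
    by (simp add: card_1_singleton_iff)
  also have "\<dots> \<longleftrightarrow> card (sset (glue G arX B) \<rho>' \<sigma>' Y) = 1"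
  proof -
    have "min (\<Sum>e\<in>edges G. card (inner e -` sset (glue G arX A) \<rho> \<sigma> Y)) 2 =
          min (\<Sum>e\<in>edges G. card (inner e -` sset (glue G arX B) \<rho>' \<sigma>' Y)) 2"
      using m fin(3) by (intro min_sum_2_eq) auto
    then show ?thesis unfolding cc(3) cc(4) by linarith
  qed
  also have "\<dots> \<longleftrightarrow> sat (glue G arX B) \<rho>' \<sigma>' (Sng Y)"
    by (simp add: card_1_singleton_iff)
  finally show ?thesis .
qed

lemma glue_corr_sat_Cnt:
  assumes I: "glue_corr A B r D D2 \<rho> \<sigma> \<rho>' \<sigma>'"
    and Y: "wfs (voc S arS n) Y" "fv2s Y \<subseteq> D2" and m: "m \<in> M" "0 < m"
    and fin: "finite (univ (glue G arX A))" "finite (univ (glue G arX B))" "finite (edges G)"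
  shows "sat (glue G arX A) \<rho> \<sigma> (Cnt Y k m) \<longleftrightarrow> sat (glue G arX B) \<rho>' \<sigma>' (Cnt Y k m)"
proof -
  note cc = glue_corr_card_sset[OF I Y fin]
  define f where "f e = card (inner e -` sset (glue G arX A) \<rho> \<sigma> Y)" for e
  define g where "g e = card (inner e -` sset (glue G arX B) \<rho>' \<sigma>' Y)" for e
  have fg: "f e mod m = g e mod m" if e: "e \<in> edges G" for e
  proof -
    have "sat (A (lab G e)) (elem_of \<circ> \<rho>) (\<lambda>j. inner e -` \<sigma> j) (Cnt (comp_st G arX e Y) (f e) m) \<longleftrightarrow>
          sat (B (lab G e)) (elem_of \<circ> \<rho>') (\<lambda>j. inner e -` \<sigma>' j) (Cnt (comp_st G arX e Y) (f e) m)"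
      using e Y(2) m by (intro glue_corr_comp_sat[OF I]) (auto simp: comp_st_simps[OF Y(1)])
    moreover have "sat (A (lab G e)) (elem_of \<circ> \<rho>) (\<lambda>j. inner e -` \<sigma> j) (Cnt (comp_st G arX e Y) (f e) m)"
      unfolding sat.simps vimage_inner_sset[OF Y(1) e, symmetric] f_def using cc(5) by blast
    ultimately have "sat (B (lab G e)) (elem_of \<circ> \<rho>') (\<lambda>j. inner e -` \<sigma>' j) (Cnt (comp_st G arX e Y) (f e) m)"
      by blast
    then show ?thesis unfolding sat.simps vimage_inner_sset[OF Y(1) e, symmetric] g_def by simp
  qed
  have "sum f (edges G) mod m = sum g (edges G) mod m"
  proof -
    have "sum f (edges G) mod m = (\<Sum>e\<in>edges G. f e mod m) mod m" by (rule mod_sum_eq[symmetric])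
    also have "\<dots> = (\<Sum>e\<in>edges G. g e mod m) mod m" using fg by (simp cong: sum.cong)
    also have "\<dots> = sum g (edges G) mod m" by (rule mod_sum_eq)
    finally show ?thesis .
  qed
  then have "card (sset (glue G arX A) \<rho> \<sigma> Y) mod m = card (sset (glue G arX B) \<rho>' \<sigma>' Y) mod m"
    unfolding cc(3) cc(4) f_def[symmetric] g_def[symmetric]
    using mod_add_right_eq[of "card {u\<in>sset (glue G arX A) \<rho> \<sigma> Y. is_outer u}" "sum f (edges G)" m]
      mod_add_right_eq[of "card {u\<in>sset (glue G arX A) \<rho> \<sigma> Y. is_outer u}" "sum g (edges G)" m] by simp
  then show ?thesis using cc(1,2) by simp
qed

lemma rM_equiv_on_port_elem:
  assumes E: "rM_equiv_on (comp_voc e) r M D D2 (A (lab G e)) \<rho> \<sigma> (B (lab G e)) \<rho>' \<sigma>'" and "i \<in> D"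
  shows "\<rho> i \<in> ports G arX A e \<longleftrightarrow> \<rho>' i \<in> ports G arX B e"
proof -
  have "\<rho> i = cnst (A (lab G e)) k \<longleftrightarrow> \<rho>' i = cnst (B (lab G e)) k" if "k \<in> {1..arX (lab G e)}" for k
    using rM_equiv_onD[OF E, of "Eq (V i) (C k)"] that \<open>i \<in> D\<close> by (auto simp: voc_def)
  then show ?thesis unfolding ports_def by blast
qed

lemma rM_equiv_on_port_set:
  assumes E: "rM_equiv_on (comp_voc e) r M D D2 (A (lab G e)) \<rho> \<sigma> (B (lab G e)) \<rho>' \<sigma>'" and "j \<in> D2"
  shows "\<sigma> j \<inter> ports G arX A e = {} \<longleftrightarrow> \<sigma>' j \<inter> ports G arX B e = {}"
proof -
  have "cnst (A (lab G e)) k \<in> \<sigma> j \<longleftrightarrow> cnst (B (lab G e)) k \<in> \<sigma>' j" if "k \<in> {1..arX (lab G e)}" for k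
    using rM_equiv_onD[OF E, of "Mem (C k) (SV j)"] that \<open>j \<in> D2\<close> by (auto simp: voc_def)
  then show ?thesis unfolding ports_def by blast
qed

lemma glue_corr_update_elem:
  assumes I: "glue_corr A B r' D D2 \<rho> \<sigma> \<rho>' \<sigma>'" and "r \<le> r'"
    and u: "u \<in> univ (glue G arX A)" and w: "w \<in> univ (glue G arX B)"
    and outer: "is_outer u \<Longrightarrow> w = u"
    and inner: "\<not> is_outer u \<Longrightarrow> \<not> is_outer w \<and> edge_of w = edge_of u \<and>
      rM_equiv_on (comp_voc (edge_of u)) r M (insert i (vars_in_comp \<rho> D (edge_of u))) D2
        (A (lab G (edge_of u))) ((elem_of \<circ> \<rho>)(i := elem_of u)) (\<lambda>j. inner (edge_of u) -` \<sigma> j)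
        (B (lab G (edge_of u))) ((elem_of \<circ> \<rho>')(i := elem_of w)) (\<lambda>j. inner (edge_of u) -` \<sigma>' j)"
  shows "glue_corr A B r (insert i D) D2 (\<rho>(i:=u)) \<sigma> (\<rho>'(i:=w)) \<sigma>'"
proof (rule glue_corrI)
  show "\<forall>e\<in>edges G. rM_equiv_on (comp_voc e) r M (vars_in_comp (\<rho>(i:=u)) (insert i D) e) D2
    (A (lab G e)) (elem_of \<circ> \<rho>(i:=u)) (\<lambda>j. inner e -` \<sigma> j) (B (lab G e)) (elem_of \<circ> \<rho>'(i:=w)) (\<lambda>j. inner e -` \<sigma>' j)"
  proof
    fix e assume e: "e \<in> edges G"
    show "rM_equiv_on (comp_voc e) r M (vars_in_comp (\<rho>(i:=u)) (insert i D) e) D2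
      (A (lab G e)) (elem_of \<circ> \<rho>(i:=u)) (\<lambda>j. inner e -` \<sigma> j) (B (lab G e)) (elem_of \<circ> \<rho>'(i:=w)) (\<lambda>j. inner e -` \<sigma>' j)"
    proof (cases "\<not> is_outer u \<and> edge_of u = e")
      case True
      then have "rM_equiv_on (comp_voc e) r M (insert i (vars_in_comp \<rho> D e)) D2
        (A (lab G e)) ((elem_of \<circ> \<rho>)(i := elem_of u)) (\<lambda>j. inner e -` \<sigma> j)
        (B (lab G e)) ((elem_of \<circ> \<rho>')(i := elem_of w)) (\<lambda>j. inner e -` \<sigma>' j)"
        using inner by auto
      then show ?thesis
        by (rule rM_equiv_on_mono) (use True in \<open>auto simp: vars_in_comp_def\<close>)
    next
      case False
      show ?thesis
        by (rule rM_equiv_on_mono[OF glue_corrD(6)[OF I, rule_format, OF e] \<open>r \<le> r'\<close>])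
          (use False in \<open>auto simp: vars_in_comp_def\<close>)
    qed
  qed
qed (use glue_corrD[OF I] u w outer inner in auto)

lemma glue_corr_forth_elem:
  assumes I: "glue_corr A B (Suc r) D D2 \<rho> \<sigma> \<rho>' \<sigma>'" and u: "u \<in> univ (glue G arX A)"
    and fin: "\<forall>e\<in>edges G. finite (univ (B (lab G e)))"
  shows "\<exists>w\<in>univ (glue G arX B). glue_corr A B r (insert i D) D2 (\<rho>(i:=u)) \<sigma> (\<rho>'(i:=w)) \<sigma>'"
proof (cases "is_outer u")
  case True
  then have w: "u \<in> univ (glue G arX B)" using u outer_in_univ_glue by blast
  have "glue_corr A B r (insert i D) D2 (\<rho>(i:=u)) \<sigma> (\<rho>'(i:=u)) \<sigma>'"
    by (rule glue_corr_update_elem[OF I _ u w]) (use True in auto)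
  then show ?thesis using w by blast
next
  case False
  define e where "e = edge_of u"
  have e: "e \<in> edges G" "elem_of u \<in> univ (A (lab G e))" "elem_of u \<notin> ports G arX A e"
    using u False by (auto simp: e_def not_outer_in_univ_glue)
  obtain y where y: "y \<in> univ (B (lab G e))"
    "rM_equiv_on (comp_voc e) r M (insert i (vars_in_comp \<rho> D e)) D2
       (A (lab G e)) ((elem_of \<circ> \<rho>)(i := elem_of u)) (\<lambda>j. inner e -` \<sigma> j)
       (B (lab G e)) ((elem_of \<circ> \<rho>')(i := y)) (\<lambda>j. inner e -` \<sigma>' j)"
    using rM_equiv_on_forth_elem[OF glue_corrD(6)[OF I, rule_format, OF e(1)] fin[rule_format, OF e(1)] e(2)]
    by blast
  have "y \<notin> ports G arX B e" using rM_equiv_on_port_elem[where A = A and B = B and e = e, OF y(2) insertI1] e(3) by simp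
  then have "inner e y \<in> univ (glue G arX B)" using e(1) y(1) by (simp add: inner_in_univ_glue)
  moreover have "glue_corr A B r (insert i D) D2 (\<rho>(i:=u)) \<sigma> (\<rho>'(i := inner e y)) \<sigma>'"
    by (rule glue_corr_update_elem[OF I _ u \<open>inner e y \<in> _\<close>]) (use y(2) False in \<open>auto simp: e_def\<close>)
  ultimately show ?thesis by blast
qed

lemma vimage_fun_upd: "(\<lambda>k. f -` (\<sigma>(j := U)) k) = (\<lambda>k. f -` \<sigma> k)(j := f -` U)"
  by (rule ext) simp

lemma glue_corr_update_set:
  assumes I: "glue_corr A B r' D D2 \<rho> \<sigma> \<rho>' \<sigma>'"
    and U: "U \<subseteq> univ (glue G arX A)" and W: "W \<subseteq> univ (glue G arX B)"
    and outer: "{u\<in>U. is_outer u} = {u\<in>W. is_outer u}"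
    and inner: "\<forall>e\<in>edges G. rM_equiv_on (comp_voc e) r M (vars_in_comp \<rho> D e) (insert j D2)
        (A (lab G e)) (elem_of \<circ> \<rho>) ((\<lambda>k. inner e -` \<sigma> k)(j := inner e -` U))
        (B (lab G e)) (elem_of \<circ> \<rho>') ((\<lambda>k. inner e -` \<sigma>' k)(j := inner e -` W))"
  shows "glue_corr A B r D (insert j D2) \<rho> (\<sigma>(j:=U)) \<rho>' (\<sigma>'(j:=W))"
proof (rule glue_corrI)
  show "\<forall>e\<in>edges G. rM_equiv_on (comp_voc e) r M (vars_in_comp \<rho> D e) (insert j D2)
      (A (lab G e)) (elem_of \<circ> \<rho>) (\<lambda>k. inner e -` (\<sigma>(j:=U)) k)
      (B (lab G e)) (elem_of \<circ> \<rho>') (\<lambda>k. inner e -` (\<sigma>'(j:=W)) k)"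
    unfolding vimage_fun_upd by (rule inner)
qed (use glue_corrD[OF I] U W outer in auto)

lemma glue_corr_forth_set_comp:
  assumes I: "glue_corr A B (Suc r) D D2 \<rho> \<sigma> \<rho>' \<sigma>'" and U: "U \<subseteq> univ (glue G arX A)"
    and e: "e \<in> edges G" and fin: "finite (univ (B (lab G e)))"
  shows "\<exists>We. We \<subseteq> univ (B (lab G e)) - ports G arX B e \<and>
    rM_equiv_on (comp_voc e) r M (vars_in_comp \<rho> D e) (insert j D2)
      (A (lab G e)) (elem_of \<circ> \<rho>) ((\<lambda>k. inner e -` \<sigma> k)(j := inner e -` U))
      (B (lab G e)) (elem_of \<circ> \<rho>') ((\<lambda>k. inner e -` \<sigma>' k)(j := We))"
proof -
  have Ue: "inner e -` U \<subseteq> univ (A (lab G e))" "inner e -` U \<inter> ports G arX A e = {}"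
    using U by (auto simp: inner_in_univ_glue)
  obtain We where We: "We \<subseteq> univ (B (lab G e))"
    "rM_equiv_on (comp_voc e) r M (vars_in_comp \<rho> D e) (insert j D2)
      (A (lab G e)) (elem_of \<circ> \<rho>) ((\<lambda>k. inner e -` \<sigma> k)(j := inner e -` U))
      (B (lab G e)) (elem_of \<circ> \<rho>') ((\<lambda>k. inner e -` \<sigma>' k)(j := We))"
    using rM_equiv_on_forth_set[OF glue_corrD(6)[OF I, rule_format, OF e] fin Ue(1)] by blast
  have "We \<inter> ports G arX B e = {}"
    using rM_equiv_on_port_set[where A = A and B = B and e = e, OF We(2) insertI1] Ue(2) by simp
  then show ?thesis using We by blast
qed

lemma glue_corr_forth_set:
  assumes I: "glue_corr A B (Suc r) D D2 \<rho> \<sigma> \<rho>' \<sigma>'" and U: "U \<subseteq> univ (glue G arX A)"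
    and fin: "\<forall>e\<in>edges G. finite (univ (B (lab G e)))"
  shows "\<exists>W\<subseteq>univ (glue G arX B). glue_corr A B r D (insert j D2) \<rho> (\<sigma>(j:=U)) \<rho>' (\<sigma>'(j:=W))"
proof -
  have "\<forall>e\<in>edges G. \<exists>We. We \<subseteq> univ (B (lab G e)) - ports G arX B e \<and>
      rM_equiv_on (comp_voc e) r M (vars_in_comp \<rho> D e) (insert j D2)
        (A (lab G e)) (elem_of \<circ> \<rho>) ((\<lambda>k. inner e -` \<sigma> k)(j := inner e -` U))
        (B (lab G e)) (elem_of \<circ> \<rho>') ((\<lambda>k. inner e -` \<sigma>' k)(j := We))"
    using glue_corr_forth_set_comp[OF I U] fin by blast
  then obtain We where We: "\<forall>e\<in>edges G. We e \<subseteq> univ (B (lab G e)) - ports G arX B e \<and>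
      rM_equiv_on (comp_voc e) r M (vars_in_comp \<rho> D e) (insert j D2)
        (A (lab G e)) (elem_of \<circ> \<rho>) ((\<lambda>k. inner e -` \<sigma> k)(j := inner e -` U))
        (B (lab G e)) (elem_of \<circ> \<rho>') ((\<lambda>k. inner e -` \<sigma>' k)(j := We e))"
    by metis
  define W where "W = {u\<in>U. is_outer u} \<union> (\<Union>e\<in>edges G. inner e ` We e)"
  have W_univ: "W \<subseteq> univ (glue G arX B)"
  proof
    fix w assume "w \<in> W"
    then consider "w \<in> U" "is_outer w" | e y where "e \<in> edges G" "y \<in> We e" "w = inner e y"
      unfolding W_def by auto
    then show "w \<in> univ (glue G arX B)"
    proof cases
      case 1 then show ?thesis using U outer_in_univ_glue by blast
    next
      case 2 then show ?thesis using We by (auto simp: inner_in_univ_glue)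
    qed
  qed
  have "inner e -` W = We e" if "e \<in> edges G" for e
    using that unfolding W_def by auto
  then have "glue_corr A B r D (insert j D2) \<rho> (\<sigma>(j:=U)) \<rho>' (\<sigma>'(j:=W))"
    using We by (intro glue_corr_update_set[OF I U W_univ]) (auto simp: W_def)
  then show ?thesis using W_univ by blast
qed

lemma glue_corr_sat_Ex1:
  assumes I: "glue_corr A B (Suc r) D D2 \<rho> \<sigma> \<rho>' \<sigma>'"
    and finA: "\<forall>e\<in>edges G. finite (univ (A (lab G e)))" and finB: "\<forall>e\<in>edges G. finite (univ (B (lab G e)))"
    and IH: "\<And>u w. glue_corr A B r (insert i D) D2 (\<rho>(i:=u)) \<sigma> (\<rho>'(i:=w)) \<sigma>' \<Longrightarrow>
      sat (glue G arX A) (\<rho>(i:=u)) \<sigma> \<phi> \<longleftrightarrow> sat (glue G arX B) (\<rho>'(i:=w)) \<sigma>' \<phi>"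
  shows "sat (glue G arX A) \<rho> \<sigma> (Ex1 i \<phi>) \<longleftrightarrow> sat (glue G arX B) \<rho>' \<sigma>' (Ex1 i \<phi>)"
proof
  assume "sat (glue G arX A) \<rho> \<sigma> (Ex1 i \<phi>)"
  then obtain u where u: "u \<in> univ (glue G arX A)" "sat (glue G arX A) (\<rho>(i:=u)) \<sigma> \<phi>" by auto
  obtain w where "w \<in> univ (glue G arX B)" "glue_corr A B r (insert i D) D2 (\<rho>(i:=u)) \<sigma> (\<rho>'(i:=w)) \<sigma>'"
    using glue_corr_forth_elem[OF I u(1) finB] by blast
  then show "sat (glue G arX B) \<rho>' \<sigma>' (Ex1 i \<phi>)" using IH u(2) by auto
next
  assume "sat (glue G arX B) \<rho>' \<sigma>' (Ex1 i \<phi>)"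
  then obtain w where w: "w \<in> univ (glue G arX B)" "sat (glue G arX B) (\<rho>'(i:=w)) \<sigma>' \<phi>" by auto
  obtain u where "u \<in> univ (glue G arX A)" "glue_corr B A r (insert i D) D2 (\<rho>'(i:=w)) \<sigma>' (\<rho>(i:=u)) \<sigma>"
    using glue_corr_forth_elem[OF glue_corr_sym[OF I] w(1) finA] by blast
  then show "sat (glue G arX A) \<rho> \<sigma> (Ex1 i \<phi>)" using IH[OF glue_corr_sym] w(2) by auto
qed

lemma glue_corr_sat_Ex2:
  assumes I: "glue_corr A B (Suc r) D D2 \<rho> \<sigma> \<rho>' \<sigma>'"
    and finA: "\<forall>e\<in>edges G. finite (univ (A (lab G e)))" and finB: "\<forall>e\<in>edges G. finite (univ (B (lab G e)))"
    and IH: "\<And>U W. glue_corr A B r D (insert j D2) \<rho> (\<sigma>(j:=U)) \<rho>' (\<sigma>'(j:=W)) \<Longrightarrow>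
      sat (glue G arX A) \<rho> (\<sigma>(j:=U)) \<phi> \<longleftrightarrow> sat (glue G arX B) \<rho>' (\<sigma>'(j:=W)) \<phi>"
  shows "sat (glue G arX A) \<rho> \<sigma> (Ex2 j \<phi>) \<longleftrightarrow> sat (glue G arX B) \<rho>' \<sigma>' (Ex2 j \<phi>)"
proof
  assume "sat (glue G arX A) \<rho> \<sigma> (Ex2 j \<phi>)"
  then obtain U where U: "U \<subseteq> univ (glue G arX A)" "sat (glue G arX A) \<rho> (\<sigma>(j:=U)) \<phi>" by auto
  obtain W where "W \<subseteq> univ (glue G arX B)" "glue_corr A B r D (insert j D2) \<rho> (\<sigma>(j:=U)) \<rho>' (\<sigma>'(j:=W))"
    using glue_corr_forth_set[OF I U(1) finB] by blast
  then show "sat (glue G arX B) \<rho>' \<sigma>' (Ex2 j \<phi>)" using IH U(2) by auto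
next
  assume "sat (glue G arX B) \<rho>' \<sigma>' (Ex2 j \<phi>)"
  then obtain W where W: "W \<subseteq> univ (glue G arX B)" "sat (glue G arX B) \<rho>' (\<sigma>'(j:=W)) \<phi>" by auto
  obtain U where "U \<subseteq> univ (glue G arX A)" "glue_corr B A r D (insert j D2) \<rho>' (\<sigma>'(j:=W)) \<rho> (\<sigma>(j:=U))"
    using glue_corr_forth_set[OF glue_corr_sym[OF I] W(1) finA] by blast
  then show "sat (glue G arX A) \<rho> \<sigma> (Ex2 j \<phi>)" using IH[OF glue_corr_sym] W(2) by auto
qed

lemma glue_corr_sat_iff:
  assumes finA: "\<forall>e\<in>edges G. finite (univ (A (lab G e)))" and finB: "\<forall>e\<in>edges G. finite (univ (B (lab G e)))"
    and fG: "finite (verts G)" "finite (edges G)"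
  shows "glue_corr A B r D D2 \<rho> \<sigma> \<rho>' \<sigma>' \<Longrightarrow> wf (voc S arS n) \<phi> \<Longrightarrow> qr \<phi> \<le> r \<Longrightarrow> mods \<phi> \<subseteq> M
    \<Longrightarrow> fv1 \<phi> \<subseteq> D \<Longrightarrow> fv2 \<phi> \<subseteq> D2 \<Longrightarrow> sat (glue G arX A) \<rho> \<sigma> \<phi> \<longleftrightarrow> sat (glue G arX B) \<rho>' \<sigma>' \<phi>"
proof (induction \<phi> arbitrary: r D D2 \<rho> \<sigma> \<rho>' \<sigma>' rule: fm.induct[of _ "\<lambda>_. True"])
  case (Eq s t) then show ?case by (intro glue_corr_sat_Eq) auto
next
  case (LabA a t) then show ?case by (intro glue_corr_sat_LabA) (auto simp: voc_def)
next
  case (IncA k s t) then show ?case by (intro glue_corr_sat_IncA) (auto simp: voc_def)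
next
  case (Mem t Y) then show ?case by (intro glue_corr_sat_Mem[where n=n]) auto
next
  case (Cnt Y k m)
  then show ?case
    by (intro glue_corr_sat_Cnt[where n=n] finite_univ_glue[OF fG finA] finite_univ_glue[OF fG finB] fG) auto
next
  case (Sub Y Z) then show ?case by (intro glue_corr_sat_Sub[where n=n]) auto
next
  case (Sng Y)
  then show ?case
    by (intro glue_corr_sat_Sng[where n=n] finite_univ_glue[OF fG finA] finite_univ_glue[OF fG finB] fG) auto
next
  case (Neg \<phi>) then show ?case by simp
next
  case (Conj \<phi> \<psi>)
  then have "sat (glue G arX A) \<rho> \<sigma> \<phi> \<longleftrightarrow> sat (glue G arX B) \<rho>' \<sigma>' \<phi>"
    "sat (glue G arX A) \<rho> \<sigma> \<psi> \<longleftrightarrow> sat (glue G arX B) \<rho>' \<sigma>' \<psi>"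
    using Conj.IH(1)[OF Conj.prems(1)] Conj.IH(2)[OF Conj.prems(1)] Conj.prems(2-) by auto
  then show ?case by simp
next
  case (Ex1 i \<phi>)
  then obtain r0 where r: "r = Suc r0" "qr \<phi> \<le> r0" by (cases r) auto
  show ?case
  proof (rule glue_corr_sat_Ex1[OF _ finA finB])
    show "glue_corr A B (Suc r0) D D2 \<rho> \<sigma> \<rho>' \<sigma>'" using Ex1.prems(1) r(1) by simp
    show "sat (glue G arX A) (\<rho>(i:=u)) \<sigma> \<phi> \<longleftrightarrow> sat (glue G arX B) (\<rho>'(i:=w)) \<sigma>' \<phi>"
      if "glue_corr A B r0 (insert i D) D2 (\<rho>(i:=u)) \<sigma> (\<rho>'(i:=w)) \<sigma>'" for u w
      using Ex1.IH[OF that] Ex1.prems r(2) by (auto simp: fun_upd_def)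
  qed
next
  case (Ex2 j \<phi>)
  then obtain r0 where r: "r = Suc r0" "qr \<phi> \<le> r0" by (cases r) auto
  show ?case
  proof (rule glue_corr_sat_Ex2[OF _ finA finB])
    show "glue_corr A B (Suc r0) D D2 \<rho> \<sigma> \<rho>' \<sigma>'" using Ex2.prems(1) r(1) by simp
    show "sat (glue G arX A) \<rho> (\<sigma>(j:=U)) \<phi> \<longleftrightarrow> sat (glue G arX B) \<rho>' (\<sigma>'(j:=W)) \<phi>"
      if "glue_corr A B r0 D (insert j D2) \<rho> (\<sigma>(j:=U)) \<rho>' (\<sigma>'(j:=W))" for U W
      using Ex2.IH[OF that] Ex2.prems r(2) by (auto simp: fun_upd_def)
  qed
qed auto

end

section \<open>Glued models of hypergraphs are flattenings\<close>

lemma src_pos_nth: "distinct s \<Longrightarrow> k < length s \<Longrightarrow> src_pos s (s ! k) = k"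
  unfolding src_pos_def
  by (rule Least_equality) (auto simp: nth_eq_iff_index_eq leI)

lemma src_pos_in: "v \<in> set s \<Longrightarrow> src_pos s v < length s \<and> s ! src_pos s v = v"
  unfolding src_pos_def by (rule LeastI_ex) (auto simp: in_set_conv_nth)

lemma image_nth_pred: "(\<lambda>k. s ! (k - 1)) ` {1..length s} = set s"
proof
  show "(\<lambda>k. s ! (k - 1)) ` {1..length s} \<subseteq> set s" by auto
  show "set s \<subseteq> (\<lambda>k. s ! (k - 1)) ` {1..length s}"
  proof
    fix v assume "v \<in> set s"
    then obtain i where "i < length s" "s ! i = v" by (auto simp: in_set_conv_nth)
    then show "v \<in> (\<lambda>k. s ! (k - 1)) ` {1..length s}" by (intro image_eqI[of _ _ "Suc i"]) auto
  qed
qed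

lemma image_inner_Inl_Inr: "inner e ` (Inl ` VV \<union> Inr ` EE - Inl ` CC) = Inl ` ((\<lambda>v. Inr (e, v)) ` (VV - CC)) \<union> Inr ` (Pair e ` EE)"
proof (intro equalityI subsetI)
  fix u assume "u \<in> inner e ` (Inl ` VV \<union> Inr ` EE - Inl ` CC)" then show "u \<in> Inl ` ((\<lambda>v. Inr (e, v)) ` (VV - CC)) \<union> Inr ` (Pair e ` EE)" by (auto simp: image_iff)
next
  fix u assume "u \<in> Inl ` ((\<lambda>v. Inr (e, v)) ` (VV - CC)) \<union> Inr ` (Pair e ` EE)"
  then consider v where "v \<in> VV" "v \<notin> CC" "u = Inl (Inr (e, v))" | f where "f \<in> EE" "u = Inr (e, f)" by auto
  then show "u \<in> inner e ` (Inl ` VV \<union> Inr ` EE - Inl ` CC)"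
  proof cases
    case 1 then show ?thesis by (intro image_eqI[of _ _ "Inl v"]) auto
  next
    case 2 then show ?thesis by (intro image_eqI[of _ _ "Inr f"]) auto
  qed
qed

context
  fixes G :: "('vg, 'eg, 'x) hg" and arX :: "'x \<Rightarrow> nat" and X :: "'x set"
    and S :: "'a set" and arS :: "'a \<Rightarrow> nat" and \<eta> :: "'x \<Rightarrow> ('v, 'e, 'a) hg"
  assumes G: "is_hg X arX G" and eta: "valuation S arS X arX \<eta>"
begin

lemma valuation_at_edge:
  assumes "e \<in> edges G"
  shows "lab G e \<in> X" "is_hg S arS (\<eta> (lab G e))" "length (srcs (\<eta> (lab G e))) = arX (lab G e)"
    "distinct (srcs (\<eta> (lab G e)))" "set (srcs (\<eta> (lab G e))) \<subseteq> verts (\<eta> (lab G e))"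
  using assms G eta unfolding is_hg_def valuation_def arity_def by auto

lemma ports_model_of:
  assumes "e \<in> edges G"
  shows "ports G arX (\<lambda>x. model_of (\<eta> x)) e = Inl ` set (srcs (\<eta> (lab G e)))"
proof -
  have "ports G arX (\<lambda>x. model_of (\<eta> x)) e = Inl ` ((\<lambda>k. srcs (\<eta> (lab G e)) ! (k - 1)) ` {1..length (srcs (\<eta> (lab G e)))})"
    unfolding ports_def model_of_def using valuation_at_edge(3)[OF assms] by (auto simp: image_image)
  then show ?thesis using image_nth_pred[of "srcs (\<eta> (lab G e))"] by simp
qed

lemma univ_glue_model_of: "univ (glue G arX (\<lambda>x. model_of (\<eta> x))) = univ (model_of (flatten G \<eta>))"
proof -
  have "inner e ` (univ (model_of (\<eta> (lab G e))) - ports G arX (\<lambda>x. model_of (\<eta> x)) e) =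
      Inl ` ((\<lambda>v. Inr (e, v)) ` (verts (\<eta> (lab G e)) - set (srcs (\<eta> (lab G e))))) \<union> Inr ` (Pair e ` edges (\<eta> (lab G e)))"
    if e: "e \<in> edges G" for e
    unfolding ports_model_of[OF e] by (simp add: model_of_def image_inner_Inl_Inr)
  then have "((\<Union>e\<in>edges G. inner e ` (univ (model_of (\<eta> (lab G e))) - ports G arX (\<lambda>x. model_of (\<eta> x)) e)) :: (('vg + 'eg \<times> 'v) + ('eg \<times> 'e)) set) =
     (\<Union>e\<in>edges G. Inl ` ((\<lambda>v. Inr (e, v)) ` (verts (\<eta> (lab G e)) - set (srcs (\<eta> (lab G e))))) \<union> Inr ` (Pair e ` edges (\<eta> (lab G e))))"
    by (intro SUP_cong refl) simp
  then have "univ (glue G arX (\<lambda>x. model_of (\<eta> x))) = Inl ` Inl ` verts G \<union>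
     (\<Union>e\<in>edges G. Inl ` ((\<lambda>v. Inr (e, v)) ` (verts (\<eta> (lab G e)) - set (srcs (\<eta> (lab G e))))) \<union> Inr ` (Pair e ` edges (\<eta> (lab G e))))"
    unfolding glue_def outer_def by (simp add: image_image)
  also have "\<dots> = univ (model_of (flatten G \<eta>))"
    unfolding model_of_def flatten_def by auto
  finally show ?thesis .
qed

lemma labrel_glue_model_of: "labrel (glue G arX (\<lambda>x. model_of (\<eta> x))) a = labrel (model_of (flatten G \<eta>)) a"
proof (intro equalityI subsetI)
  fix u assume "u \<in> labrel (glue G arX (\<lambda>x. model_of (\<eta> x))) a"
  then show "u \<in> labrel (model_of (flatten G \<eta>)) a"
    unfolding glue_def model_of_def flatten_def by auto
next
  fix u assume "u \<in> labrel (model_of (flatten G \<eta>)) a"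
  then obtain e f where ef: "u = Inr (e, f)" "e \<in> edges G" "f \<in> edges (\<eta> (lab G e))" "lab (\<eta> (lab G e)) f = a"
    unfolding model_of_def flatten_def by auto
  then show "u \<in> labrel (glue G arX (\<lambda>x. model_of (\<eta> x))) a"
    unfolding glue_def model_of_def by (auto intro!: bexI[of _ e] image_eqI[of _ _ "Inr f"])
qed

lemma increl_glue_subset_model_of:
  "increl (glue G arX (\<lambda>x. model_of (\<eta> x))) i \<subseteq> increl (model_of (flatten G \<eta>)) i"
proof
  fix p assume "p \<in> increl (glue G arX (\<lambda>x. model_of (\<eta> x))) i"
  then consider e x y where "p = (inner e x, inner e y)" "e \<in> edges G" "(x, y) \<in> increl (model_of (\<eta> (lab G e))) i"
      "y \<notin> ports G arX (\<lambda>x. model_of (\<eta> x)) e"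
    | e x k where "p = (inner e x, outer (inc G e ! (k - 1)))" "e \<in> edges G" "k \<in> {1..arX (lab G e)}"
      "(x, cnst (model_of (\<eta> (lab G e))) k) \<in> increl (model_of (\<eta> (lab G e))) i"
    unfolding glue_def by auto
  then show "p \<in> increl (model_of (flatten G \<eta>)) i"
  proof cases
    case 1
    note e = 1(2)
    obtain f v where fv: "x = Inr f" "y = Inl v" "f \<in> edges (\<eta> (lab G e))" "1 \<le> i" "i \<le> length (inc (\<eta> (lab G e)) f)"
      "inc (\<eta> (lab G e)) f ! (i - 1) = v" using 1(3) unfolding model_of_def by auto
    have vs: "v \<notin> set (srcs (\<eta> (lab G e)))" using 1(4) fv(2) unfolding ports_model_of[OF e] by auto
    show ?thesis unfolding 1(1) fv(1,2) model_of_def flatten_def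
      using e fv vs by auto
  next
    case 2
    note e = 2(2)
    let ?s = "srcs (\<eta> (lab G e))"
    have k: "k - 1 < length ?s" using 2(3) valuation_at_edge(3)[OF e] by auto
    obtain f where f: "x = Inr f" "f \<in> edges (\<eta> (lab G e))" "1 \<le> i" "i \<le> length (inc (\<eta> (lab G e)) f)"
      "inc (\<eta> (lab G e)) f ! (i - 1) = ?s ! (k - 1)" using 2(4) unfolding model_of_def by auto
    have sp: "src_pos ?s (?s ! (k - 1)) = k - 1" using src_pos_nth[OF valuation_at_edge(4)[OF e] k] .
    have inS: "?s ! (k - 1) \<in> set ?s" using k by simp
    show ?thesis unfolding 2(1) f(1) model_of_def flatten_def outer_def
      using e f sp inS by auto
  qed
qed

lemma increl_model_of_subset_glue:
  "increl (model_of (flatten G \<eta>)) i \<subseteq> increl (glue G arX (\<lambda>x. model_of (\<eta> x))) i"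
proof
  fix p assume "p \<in> increl (model_of (flatten G \<eta>)) i"
  then obtain e f where ef: "p = (Inr (e, f), Inl (inc (flatten G \<eta>) (e, f) ! (i - 1)))" "e \<in> edges G" "f \<in> edges (\<eta> (lab G e))"
    "1 \<le> i" "i \<le> length (inc (\<eta> (lab G e)) f)"
    unfolding model_of_def by (auto simp: flatten_def)
  note e = ef(2)
  let ?s = "srcs (\<eta> (lab G e))"
  define v where "v = inc (\<eta> (lab G e)) f ! (i - 1)"
  have pv: "p = (Inr (e, f), Inl (if v \<in> set ?s then Inl (inc G e ! src_pos ?s v) else Inr (e, v)))"
    using ef unfolding v_def flatten_def by auto
  have xin: "(Inr f, Inl v) \<in> increl (model_of (\<eta> (lab G e))) i"
    unfolding model_of_def v_def using ef by auto
  show "p \<in> increl (glue G arX (\<lambda>x. model_of (\<eta> x))) i"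
  proof (cases "v \<in> set ?s")
    case True
    define k where "k = Suc (src_pos ?s v)"
    have k: "k \<in> {1..arX (lab G e)}" "?s ! (k - 1) = v" using src_pos_in[OF True] valuation_at_edge(3)[OF e]
      unfolding k_def by auto
    have c: "cnst (model_of (\<eta> (lab G e))) k = Inl v" using k(2) unfolding model_of_def by simp
    have "p = (inner e (Inr f), outer (inc G e ! (k - 1)))" using pv True unfolding k_def outer_def by simp
    then show ?thesis unfolding glue_def using e k(1) xin c by (auto intro!: exI[of _ e] exI[of _ "Inr f"] exI[of _ k])
  next
    case False
    have "p = (inner e (Inr f), inner e (Inl v))" using pv False by simp
    moreover have "Inl v \<notin> ports G arX (\<lambda>x. model_of (\<eta> x)) e" using False unfolding ports_model_of[OF e] by auto
    ultimately show ?thesis using e xin unfolding glue_def model.select_convs by blast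
  qed
qed

lemma increl_glue_model_of:
  "increl (glue G arX (\<lambda>x. model_of (\<eta> x))) i = increl (model_of (flatten G \<eta>)) i"
  by (rule equalityI[OF increl_glue_subset_model_of increl_model_of_subset_glue])

lemma cnst_glue_model_of:
  assumes "j \<in> {1..length (srcs G)}"
  shows "cnst (glue G arX (\<lambda>x. model_of (\<eta> x))) j = cnst (model_of (flatten G \<eta>)) j"
    "cnst (glue G arX (\<lambda>x. model_of (\<eta> x))) j \<in> univ (glue G arX (\<lambda>x. model_of (\<eta> x)))"
proof -
  show "cnst (glue G arX (\<lambda>x. model_of (\<eta> x))) j = cnst (model_of (flatten G \<eta>)) j"
    using assms unfolding glue_def model_of_def flatten_def outer_def by auto
  have "srcs G ! (j - 1) \<in> verts G" using assms G unfolding is_hg_def by auto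
  then show "cnst (glue G arX (\<lambda>x. model_of (\<eta> x))) j \<in> univ (glue G arX (\<lambda>x. model_of (\<eta> x)))"
    unfolding glue_def by auto
qed

lemma glue_model_of_iso: "iso_model (voc S arS (arity G)) (glue G arX (\<lambda>x. model_of (\<eta> x))) (model_of (flatten G \<eta>))"
  unfolding iso_model_def voc_def
  using univ_glue_model_of labrel_glue_model_of increl_glue_model_of cnst_glue_model_of
  by (auto intro!: exI[of _ id] simp: arity_def bij_betw_id)

end

lemma finite_model_of: "is_hg S0 ar K \<Longrightarrow> finite (univ (model_of K))"
  by (auto simp: model_of_def is_hg_def)

lemma in_domain_finite_univ:
  assumes "in_domain S arS X arX A" "is_hg X arX G"
  shows "\<forall>e\<in>edges G. finite (univ (A (lab G e)))"
proof
  fix e assume "e \<in> edges G"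
  then have "lab G e \<in> X" using assms(2) by (auto simp: is_hg_def)
  then obtain K where "is_hg S arS K" "A (lab G e) = model_of K" using assms(1) unfolding in_domain_def by blast
  then show "finite (univ (A (lab G e)))" using finite_model_of by metis
qed

lemma glue_compatible:
  fixes S :: "'a set" and X :: "'x set" and G :: "('vg, 'eg, 'x) hg"
  assumes "is_hg X arX G"
  shows "compatible S arS X arX (arity G) (glue G arX)"
  unfolding compatible_def
proof (intro allI impI)
  fix r M and A B :: "'x \<Rightarrow> ('v + 'e, 'a) model"
  assume AB: "in_domain S arS X arX A \<and> in_domain S arS X arX B \<and>
    (\<forall>x\<in>X. rM_equiv (voc S arS (arX x)) r M (A x) (B x))"
  have fin: "finite (verts G)" "finite (edges G)" using assms by (auto simp: is_hg_def)
  have finA: "\<forall>e\<in>edges G. finite (univ (A (lab G e)))"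
    and finB: "\<forall>e\<in>edges G. finite (univ (B (lab G e)))"
    using in_domain_finite_univ AB assms by blast+
  have init: "glue_corr G arX S arS M A B r {} {} \<rho> (\<lambda>_. {}) \<rho>' (\<lambda>_. {})" for \<rho> \<rho>'
  proof (rule glue_corrI)
    show "\<forall>e\<in>edges G. rM_equiv_on (voc S arS (arX (lab G e))) r M (vars_in_comp \<rho> {} e) {}
      (A (lab G e)) (elem_of \<circ> \<rho>) (\<lambda>j. inner e -` {}) (B (lab G e)) (elem_of \<circ> \<rho>') (\<lambda>j. inner e -` {})"
      using AB assms by (auto simp: vars_in_comp_def rM_equiv_on_empty_iff is_hg_def)
  qed auto
  then show "rM_equiv (voc S arS (arity G)) r M (glue G arX A) (glue G arX B)"
    using glue_corr_sat_iff[OF finA finB fin init] unfolding rM_equiv_def models_def sentence_def by blast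
qed

theorem lemma4p11:
  fixes S :: "'a set" and arS :: "'a \<Rightarrow> nat"
    and X :: "'x set" and arX :: "'x \<Rightarrow> nat"
    and G :: "('vg, 'eg, 'x) hg"
  assumes "finite S"
    and "is_hg X arX G"
  shows "\<exists>f :: ('x \<Rightarrow> ('v + 'e, 'a) model) \<Rightarrow> (('vg + 'eg \<times> 'v) + ('eg \<times> 'e), 'a) model.
           compatible S arS X arX (arity G) f \<and>
           (\<forall>\<eta> :: 'x \<Rightarrow> ('v, 'e, 'a) hg. valuation S arS X arX \<eta> \<longrightarrow>
              iso_model (voc S arS (arity G)) (f (\<lambda>x. model_of (\<eta> x))) (model_of (flatten G \<eta>)))"
  using glue_compatible[OF assms(2)] glue_model_of_iso[OF assms(2)] by blast

end
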